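(* Let $n\ge1$ and $\eta\in(0,1]$. Consider the correlations obtained in the routed Bell scenario with $n$ long-path inputs from the state $|\Phi^+\rangle=\frac{1}{\sqrt2}(|00\rangle+|11\rangle)$, Alice measuring the observables $A_0=Z$, $A_1=X$ (projectively), the short-path device measuring $B^{\mathrm S}_0=\frac{Z+X}{\sqrt2}$, $B^{\mathrm S}_1=\frac{Z-X}{\sqrt2}$ (projectively), and the long-path device measuring, for input $y$, the POVM $\mathrm B^{\mathrm L}_{b|y}=\frac{\eta}{2}\big(I+(-1)^b(\cos\theta_yZ+\sin\theta_yX)\big)$ for $b\in\{0,1\}$ and $\mathrm B^{\mathrm L}_{\varnothing|y}=(1-\eta)I$. These correlations have $\mathcal S=2\sqrt2$, $\mathcal T_n=\eta$, $\mathcal W_n=\eta$, and they are not SRQ whenever $\eta>1/n$.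
   Context: Routed Bell scenario with $n$ long-path inputs: Alice has input $x\in\{0,1\}$ and outcome $a\in\{0,1\}$; a route $r\in\{\mathrm S,\mathrm L\}$ is chosen; if $r=\mathrm S$ Bob has input $y\in\{0,1\}$ and outcome $b\in\{0,1\}$; if $r=\mathrm L$ Bob has input $y\in\{0,\dots,n-1\}$ and outcome $b\in\{0,1,\varnothing\}$. Set $\theta_y=y\pi/n$. A binary observable $O$ is measured via projectors $\frac12(I+(-1)^aO)$. Quantum correlations: $p(a,b|x,y,r)=\langle\Phi^+|\mathrm A_{a|x}\otimes\mathrm B^r_{b|y}|\Phi^+\rangle$. Correlations are short-range quantum (SRQ) if there exist finite-dimensional complex Hilbert spaces $H_A,H_B$, a density operator $\rho_{AB}$, POVMs $\{\mathrm A_{a|x}\}_{a}$ on $H_A$, POVMs $\{\mathrm B^{\mathrm S}_{b|y}\}_b$ on $H_B$, a POVM $\{\mathrm E_\lambda\}_{\lambda\in\Lambda}$ on $H_B$ with finite $\Lambda$, and conditional probabilities $p(b|y,\lambda)$, $b\in\{0,1,\varnothing\}$, such that $p(a,b|x,y,\mathrm S)=\mathrm{tr}(\rho_{AB}\mathrm A_{a|x}\otimes\mathrm B^{\mathrm S}_{b|y})$ and $p(a,b|x,y,\mathrm L)=\sum_\lambda p(b|y,\lambda)\mathrm{tr}(\rho_{AB}\mathrm A_{a|x}\otimes\mathrm E_\lambda)$. Correlators $\langle A_xB^r_y\rangle:=\sum_{a,b\in\{0,1\}}(-1)^{a+b}p(a,b|x,y,r)$; $\mathcal S:=\sum_{x,y\in\{0,1\}}(-1)^{xy}\langle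 A_xB^{\mathrm S}_y\rangle$; $\mathcal W_n:=\frac1n\sum_{y}\big(\cos\theta_y\langle A_0B^{\mathrm L}_y\rangle+\sin\theta_y\langle A_1B^{\mathrm L}_y\rangle\big)$; $\mathcal T_n:=\frac1n\sum_y\sum_{b\in\{0,1\}}p(b|y,\mathrm L)$ with $p(b|y,\mathrm L)=\sum_ap(a,b|x,y,\mathrm L)$. *)

theory Defs
  imports Complex_Main "Jordan_Normal_Form.Matrix"
begin

definition mtrace :: "complex mat \<Rightarrow> complex" where
  "mtrace M = (\<Sum>i<dim_row M. M $$ (i, i))"

definition kron :: "complex mat \<Rightarrow> complex mat \<Rightarrow> complex mat" where
  "kron A B = mat (dim_row A * dim_row B) (dim_col A * dim_col B)
     (\<lambda>(i, j). A $$ (i div dim_row B, j div dim_col B) * B $$ (i mod dim_row B, j mod dim_col B))"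

definition psd :: "nat \<Rightarrow> complex mat \<Rightarrow> bool" where
  "psd d M \<longleftrightarrow> M \<in> carrier_mat d d \<and>
     (\<forall>v \<in> carrier_vec d. Im ((M *\<^sub>v v) \<bullet>c v) = 0 \<and> Re ((M *\<^sub>v v) \<bullet>c v) \<ge> 0)"

definition density_op :: "nat \<Rightarrow> complex mat \<Rightarrow> bool" where
  "density_op d \<rho> \<longleftrightarrow> psd d \<rho> \<and> mtrace \<rho> = 1"

definition povm :: "nat \<Rightarrow> 'b set \<Rightarrow> ('b \<Rightarrow> complex mat) \<Rightarrow> bool" where
  "povm d Outs E \<longleftrightarrow> finite Outs \<and> (\<forall>b\<in>Outs. psd d (E b)) \<and>
     (\<forall>i<d. \<forall>j<d. (\<Sum>b\<in>Outs. E b $$ (i, j)) = (1\<^sub>m d) $$ (i, j))"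

text \<open>Outcomes/inputs are naturals; Alice: x,a in {0,1}; short path: y,b in {0,1};
 long path: y in {0..<n}, b in {Some 0, Some 1, None}, None being the no-click outcome.
 A correlation is a pair of functions pS a b x y and pL a b x y.\<close>

definition outL :: "nat option set" where
  "outL = {Some 0, Some 1, None}"

definition SRQ :: "nat \<Rightarrow> (nat \<Rightarrow> nat \<Rightarrow> nat \<Rightarrow> nat \<Rightarrow> real)
                 \<Rightarrow> (nat \<Rightarrow> nat option \<Rightarrow> nat \<Rightarrow> nat \<Rightarrow> real) \<Rightarrow> bool" where
  "SRQ n pS pL \<longleftrightarrow>
     (\<exists>(dA::nat) (dB::nat) \<rho> (A :: nat \<Rightarrow> nat \<Rightarrow> complex mat) (BS :: nat \<Rightarrow> nat \<Rightarrow> complex mat)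
        (E :: nat \<Rightarrow> complex mat) (\<Lambda> :: nat set) (pb :: nat option \<Rightarrow> nat \<Rightarrow> nat \<Rightarrow> real).
        density_op (dA * dB) \<rho> \<and>
        (\<forall>x<2. povm dA {0, 1} (A x)) \<and>
        (\<forall>y<2. povm dB {0, 1} (BS y)) \<and>
        finite \<Lambda> \<and> povm dB \<Lambda> E \<and>
        (\<forall>y<n. \<forall>l\<in>\<Lambda>. (\<forall>b\<in>outL. pb b y l \<ge> 0) \<and> (\<Sum>b\<in>outL. pb b y l) = 1) \<and>
        (\<forall>a<2. \<forall>b<2. \<forall>x<2. \<forall>y<2.
           complex_of_real (pS a b x y) = mtrace (\<rho> * kron (A x a) (BS y b))) \<and>
        (\<forall>a<2. \<forall>b\<in>outL. \<forall>x<2. \<forall>y<n.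
           complex_of_real (pL a b x y) =
             (\<Sum>l\<in>\<Lambda>. complex_of_real (pb b y l) * mtrace (\<rho> * kron (A x a) (E l)))))"

definition corrS :: "(nat \<Rightarrow> nat \<Rightarrow> nat \<Rightarrow> nat \<Rightarrow> real) \<Rightarrow> nat \<Rightarrow> nat \<Rightarrow> real" where
  "corrS pS x y = (\<Sum>a<2. \<Sum>b<2. (-1) ^ (a + b) * pS a b x y)"

definition corrL :: "(nat \<Rightarrow> nat option \<Rightarrow> nat \<Rightarrow> nat \<Rightarrow> real) \<Rightarrow> nat \<Rightarrow> nat \<Rightarrow> real" where
  "corrL pL x y = (\<Sum>a<2. \<Sum>b<2. (-1) ^ (a + b) * pL a (Some b) x y)"

definition CHSH :: "(nat \<Rightarrow> nat \<Rightarrow> nat \<Rightarrow> nat \<Rightarrow> real) \<Rightarrow> real" where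
  "CHSH pS = (\<Sum>x<2. \<Sum>y<2. (-1) ^ (x * y) * corrS pS x y)"

definition theta :: "nat \<Rightarrow> nat \<Rightarrow> real" where
  "theta n y = real y * pi / real n"

definition Wn :: "nat \<Rightarrow> (nat \<Rightarrow> nat option \<Rightarrow> nat \<Rightarrow> nat \<Rightarrow> real) \<Rightarrow> real" where
  "Wn n pL = (1 / real n) * (\<Sum>y<n. cos (theta n y) * corrL pL 0 y + sin (theta n y) * corrL pL 1 y)"

text \<open>Marginal p(b|y,L) = sum_a p(a,b|x,y,L), taken at Alice's input x = 0.\<close>
definition Tn :: "nat \<Rightarrow> (nat \<Rightarrow> nat option \<Rightarrow> nat \<Rightarrow> nat \<Rightarrow> real) \<Rightarrow> real" where
  "Tn n pL = (1 / real n) * (\<Sum>y<n. \<Sum>b<2. \<Sum>a<2. pL a (Some b) 0 y)"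

definition Zm :: "complex mat" where "Zm = mat_of_rows_list 2 [[1, 0], [0, -1]]"
definition Xm :: "complex mat" where "Xm = mat_of_rows_list 2 [[0, 1], [1, 0]]"

definition proj :: "complex mat \<Rightarrow> nat \<Rightarrow> complex mat" where
  "proj Obs a = (1 / 2 :: complex) \<cdot>\<^sub>m (1\<^sub>m 2 + ((-1) ^ a :: complex) \<cdot>\<^sub>m Obs)"

definition phi_plus :: "complex vec" where
  "phi_plus = vec_of_list [1 / sqrt 2, 0, 0, 1 / sqrt 2]"

definition expect :: "complex mat \<Rightarrow> complex" where
  "expect M = (M *\<^sub>v phi_plus) \<bullet>c phi_plus"

definition Aq :: "nat \<Rightarrow> nat \<Rightarrow> complex mat" where
  "Aq x a = proj (if x = 0 then Zm else Xm) a"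

definition BSq :: "nat \<Rightarrow> nat \<Rightarrow> complex mat" where
  "BSq y b = proj (if y = 0 then (1 / complex_of_real (sqrt 2)) \<cdot>\<^sub>m (Zm + Xm)
                   else (1 / complex_of_real (sqrt 2)) \<cdot>\<^sub>m (Zm - Xm)) b"

definition BLq :: "real \<Rightarrow> nat \<Rightarrow> nat \<Rightarrow> nat option \<Rightarrow> complex mat" where
  "BLq \<eta> n y b = (case b of
      Some c \<Rightarrow> complex_of_real (\<eta> / 2) \<cdot>\<^sub>m (1\<^sub>m 2 + ((-1) ^ c :: complex) \<cdot>\<^sub>m
                 (complex_of_real (cos (theta n y)) \<cdot>\<^sub>m Zm + complex_of_real (sin (theta n y)) \<cdot>\<^sub>m Xm))
    | None \<Rightarrow> complex_of_real (1 - \<eta>) \<cdot>\<^sub>m 1\<^sub>m 2)"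

definition pQS :: "nat \<Rightarrow> nat \<Rightarrow> nat \<Rightarrow> nat \<Rightarrow> real" where
  "pQS a b x y = Re (expect (kron (Aq x a) (BSq y b)))"

definition pQL :: "real \<Rightarrow> nat \<Rightarrow> nat \<Rightarrow> nat option \<Rightarrow> nat \<Rightarrow> nat \<Rightarrow> real" where
  "pQL \<eta> n a b x y = Re (expect (kron (Aq x a) (BLq \<eta> n y b)))"

end

theory Submission
  imports Defs
begin

text \<open>
  Suppose an SRQ model reproduced the correlations. Writing the state as a mixture of vectors w k,
  the short-path statistics attain Tsirelson's bound 2 sqrt 2, and the sum-of-squares certificate
  of that bound forces every w k to attain it as well; hence Alice's observables anticommute on each
  w k. The effect E l of each hidden outcome l of the long-path device acts on Bob's side only and
  therefore commutes with Alice's measurements, which yields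
  \<bar>\<alpha> <A0>_l + \<beta> <A1>_l\<bar> \<le> p(l) for every unit vector (\<alpha>, \<beta>).
  Since W_n = T_n, every l must attain this bound in the direction theta_y of each input y for which
  it produces a click. Distinct angles theta_y differ by less than pi, so each l clicks for at most
  one input y, and T_n \<le> 1/n. For the given correlations T_n = W_n = \<eta>, so \<eta> \<le> 1/n.
\<close>

lemma sum_lessThan_2: "(\<Sum>a<(2::nat). f a) = f 0 + f 1"
  by (simp add: numeral_2_eq_2)

text \<open>A vector of C^d is a function nat \<Rightarrow> complex that vanishes from d on (in_dim d);
  this avoids carrier bookkeeping for vectors. mat_app d X f is the matrix-vector product.\<close>

definition mat_app :: "nat \<Rightarrow> complex mat \<Rightarrow> (nat \<Rightarrow> complex) \<Rightarrow> (nat \<Rightarrow> complex)" where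
  "mat_app d X f = (\<lambda>i. if i < d then \<Sum>j<d. X$$(i,j) * f j else 0)"

definition cinner :: "nat \<Rightarrow> (nat \<Rightarrow> complex) \<Rightarrow> (nat \<Rightarrow> complex) \<Rightarrow> complex" where
  "cinner d f g = (\<Sum>i<d. f i * cnj (g i))"

definition qform :: "nat \<Rightarrow> complex mat \<Rightarrow> (nat \<Rightarrow> complex) \<Rightarrow> complex" where
  "qform d X f = cinner d (mat_app d X f) f"

definition in_dim :: "nat \<Rightarrow> (nat \<Rightarrow> complex) \<Rightarrow> bool" where
  "in_dim d f \<longleftrightarrow> (\<forall>i\<ge>d. f i = 0)"

definition sqnorm :: "nat \<Rightarrow> (nat \<Rightarrow> complex) \<Rightarrow> real" where
  "sqnorm d f = Re (cinner d f f)"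

definition hermitian_on :: "nat \<Rightarrow> complex mat \<Rightarrow> bool" where
  "hermitian_on d X \<longleftrightarrow> (\<forall>i<d. \<forall>j<d. X$$(j,i) = cnj (X$$(i,j)))"

definition unit_fn :: "nat \<Rightarrow> nat \<Rightarrow> complex" where
  "unit_fn i = (\<lambda>k. if k = i then 1 else 0)"

lemma mat_app_less: "i < d \<Longrightarrow> mat_app d X f i = (\<Sum>j<d. X$$(i,j) * f j)"
  unfolding mat_app_def by simp

lemma in_dim_mat_app: "in_dim d (mat_app d X f)"
  unfolding in_dim_def mat_app_def by simp

lemma in_dim_diff: "in_dim d u \<Longrightarrow> in_dim d v \<Longrightarrow> in_dim d (\<lambda>i. u i - v i)"
  unfolding in_dim_def by simp

lemma in_dim_eqI: "in_dim d u \<Longrightarrow> in_dim d v \<Longrightarrow> (\<And>i. i < d \<Longrightarrow> u i = v i) \<Longrightarrow> u = v"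
  unfolding in_dim_def by (rule ext) (metis not_less)

lemma mat_app_lincomb:
  "mat_app d X (\<lambda>k. x * g k + y * h k) = (\<lambda>a. x * mat_app d X g a + y * mat_app d X h a)"
  unfolding mat_app_def
  by (rule ext) (simp add: distrib_left sum.distrib sum_distrib_left mult.left_commute)

lemma mat_app_diff: "mat_app d X (\<lambda>i. u i - v i) = (\<lambda>i. mat_app d X u i - mat_app d X v i)"
  using mat_app_lincomb[of d X 1 u "-1" v] by simp

lemma mat_app_mult:
  assumes "X \<in> carrier_mat d d" "Y \<in> carrier_mat d d"
  shows "mat_app d (X*Y) f = mat_app d X (mat_app d Y f)"
proof (rule ext)
  fix i
  show "mat_app d (X*Y) f i = mat_app d X (mat_app d Y f) i"
  proof (cases "i < d")
    case False then show ?thesis by (simp add: mat_app_def)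
  next
    case True
    have "mat_app d (X*Y) f i = (\<Sum>j<d. (\<Sum>k<d. X$$(i,k) * Y$$(k,j)) * f j)"
      using assms True by (simp add: mat_app_less scalar_prod_def lessThan_atLeast0)
    also have "\<dots> = (\<Sum>k<d. X$$(i,k) * (\<Sum>j<d. Y$$(k,j) * f j))"
      unfolding sum_distrib_right sum_distrib_left by (subst sum.swap) (simp add: mult.assoc)
    also have "\<dots> = mat_app d X (mat_app d Y f) i"
      using True by (simp add: mat_app_less)
    finally show ?thesis .
  qed
qed

lemma mat_app_one: assumes "in_dim d f" shows "mat_app d (1\<^sub>m d) f = f"
proof (rule ext)
  fix i show "mat_app d (1\<^sub>m d) f i = f i"
  proof (cases "i < d")
    case True
    have "mat_app d (1\<^sub>m d) f i = (\<Sum>j<d. if i = j then f j else 0)"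
      unfolding mat_app_less[OF True] using True by (intro sum.cong refl) simp
    also have "\<dots> = f i" using True by simp
    finally show ?thesis .
  next
    case False then show ?thesis using assms by (simp add: mat_app_def in_dim_def)
  qed
qed

lemma sum_mat_app_eq_self:
  assumes "finite L" "\<forall>i<d. \<forall>j<d. (\<Sum>l\<in>L. X l $$ (i,j)) = (if i = j then 1 else 0)" "in_dim d f"
  shows "(\<Sum>l\<in>L. mat_app d (X l) f i) = f i"
proof (cases "i < d")
  case False then show ?thesis using assms(3) by (simp add: mat_app_def in_dim_def)
next
  case True
  have "(\<Sum>l\<in>L. mat_app d (X l) f i) = (\<Sum>j<d. (\<Sum>l\<in>L. X l $$ (i,j)) * f j)"
    using True unfolding mat_app_less[OF True] sum_distrib_right by (subst sum.swap) simp
  also have "\<dots> = (\<Sum>j<d. (if i = j then f j else 0))"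
    using assms(2) True by (intro sum.cong refl) simp
  also have "\<dots> = f i" using True by simp
  finally show ?thesis .
qed

lemma cinner_mat_app_left: "cinner d (mat_app d X f) g = (\<Sum>i<d. (\<Sum>j<d. X$$(i,j) * f j) * cnj (g i))"
  unfolding cinner_def by (rule sum.cong[OF refl]) (simp add: mat_app_less)

lemma cinner_mat_app_right: "cinner d g (mat_app d X f) = (\<Sum>i<d. g i * cnj (\<Sum>j<d. X$$(i,j) * f j))"
  unfolding cinner_def by (rule sum.cong[OF refl]) (simp add: mat_app_less)

lemma cinner_commute: "cinner d g f = cnj (cinner d f g)"
  unfolding cinner_def by (simp add: mult.commute)

lemma cinner_lincomb_left: "cinner d (\<lambda>i. a * u i + b * v i) g = a * cinner d u g + b * cinner d v g"
  unfolding cinner_def by (simp add: algebra_simps sum.distrib sum_distrib_left)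

lemma cinner_lincomb_right: "cinner d f (\<lambda>i. a * u i + b * v i) = cnj a * cinner d f u + cnj b * cinner d f v"
  unfolding cinner_def by (simp add: algebra_simps sum.distrib sum_distrib_left)

lemma cinner_diff_left: "cinner d (\<lambda>i. u i - v i) g = cinner d u g - cinner d v g"
  unfolding cinner_def by (simp add: algebra_simps sum_subtractf)

lemma cinner_diff_right: "cinner d f (\<lambda>i. u i - v i) = cinner d f u - cinner d f v"
  unfolding cinner_def by (simp add: algebra_simps sum_subtractf)

lemma cinner_sum_left: "cinner d (\<lambda>i. \<Sum>l\<in>L. u l i) g = (\<Sum>l\<in>L. cinner d (u l) g)"
  unfolding cinner_def sum_distrib_right by (rule sum.swap)

lemma cinner_self: "cinner d f f = complex_of_real (sqnorm d f)"
proof -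
  have "cinner d f f = (\<Sum>i<d. complex_of_real ((cmod (f i))^2))"
    unfolding cinner_def by (intro sum.cong refl) (rule complex_norm_square[symmetric])
  then show ?thesis unfolding sqnorm_def by simp
qed

lemma sqnorm_eq_sum: "sqnorm d f = (\<Sum>i<d. (cmod (f i))^2)"
  unfolding sqnorm_def cinner_def complex_norm_square[symmetric] Re_sum by simp

lemma sqnorm_nonneg: "0 \<le> sqnorm d f"
  unfolding sqnorm_eq_sum by (simp add: sum_nonneg)

lemma sqnorm_eq_0D: "sqnorm d f = 0 \<Longrightarrow> i < d \<Longrightarrow> f i = 0"
  unfolding sqnorm_eq_sum by (subst (asm) sum_nonneg_eq_0_iff) auto

lemma sqnorm_diff: "sqnorm d (\<lambda>i. u i - v i) = sqnorm d u - 2 * Re (cinner d u v) + sqnorm d v"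
proof -
  have "cinner d (\<lambda>i. u i - v i) (\<lambda>i. u i - v i)
      = cinner d u u - cinner d u v - cinner d v u + cinner d v v"
    unfolding cinner_diff_left cinner_diff_right by simp
  moreover have "Re (cinner d v u) = Re (cinner d u v)" using cinner_commute[of d v u] by simp
  ultimately show ?thesis unfolding sqnorm_def by simp
qed

lemma sqnorm_diff_eq_0_imp_eq: "in_dim d u \<Longrightarrow> in_dim d v \<Longrightarrow> sqnorm d (\<lambda>i. u i - v i) = 0 \<Longrightarrow> u = v"
  by (rule in_dim_eqI) (auto dest: sqnorm_eq_0D)

lemma mat_app_unit_fn: "j < d \<Longrightarrow> mat_app d X (unit_fn j) = (\<lambda>a. if a < d then X$$(a,j) else 0)"
  unfolding mat_app_def unit_fn_def by (auto simp: if_distrib cong: if_cong)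

lemma cinner_unit_fn: "i < d \<Longrightarrow> cinner d h (unit_fn i) = h i"
  unfolding cinner_def unit_fn_def by (auto simp: if_distrib cong: if_cong)

lemma qform_unit_fn: "i < d \<Longrightarrow> qform d X (unit_fn i) = X$$(i,i)"
  unfolding qform_def by (simp add: mat_app_unit_fn cinner_unit_fn)

lemma cinner_lincomb_unit_fn:
  assumes "i < d" "j < d"
  shows "cinner d u (\<lambda>k. x * unit_fn i k + y * unit_fn j k) = u i * cnj x + u j * cnj y"
proof -
  have "cinner d u (\<lambda>k. x * unit_fn i k + y * unit_fn j k)
      = cnj x * cinner d u (unit_fn i) + cnj y * cinner d u (unit_fn j)"
    unfolding cinner_def by (simp add: distrib_left sum.distrib sum_distrib_left mult.left_commute)
  then show ?thesis using assms by (simp add: cinner_unit_fn)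
qed

lemma qform_lincomb_unit_fn:
  assumes "i < d" "j < d"
  shows "qform d X (\<lambda>k. x * unit_fn i k + y * unit_fn j k) =
     (X$$(i,i) * x + X$$(i,j) * y) * cnj x + (X$$(j,i) * x + X$$(j,j) * y) * cnj y"
  unfolding qform_def mat_app_lincomb cinner_lincomb_unit_fn[OF assms] using assms
  by (simp add: mat_app_unit_fn algebra_simps)

lemma qform_add_mult:
  "qform d M (\<lambda>i. f i + t * g i)
      = qform d M f + cnj t * cinner d (mat_app d M f) g + t * cinner d (mat_app d M g) f + t * cnj t * qform d M g"
proof -
  have "mat_app d M (\<lambda>i. f i + t * g i) = (\<lambda>a. mat_app d M f a + t * mat_app d M g a)"
    using mat_app_lincomb[of d M 1 f t g] by simp
  then have "qform d M (\<lambda>i. f i + t * g i)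
      = (\<Sum>i<d. (mat_app d M f i + t * mat_app d M g i) * (cnj (f i) + cnj t * cnj (g i)))"
    unfolding qform_def cinner_def by simp
  also have "\<dots> = (\<Sum>i<d. mat_app d M f i * cnj (f i) + cnj t * (mat_app d M f i * cnj (g i)) + t * (mat_app d M g i * cnj (f i)) + t * cnj t * (mat_app d M g i * cnj (g i)))"
    by (rule sum.cong[OF refl]) (simp add: algebra_simps)
  also have "\<dots> = qform d M f + cnj t * cinner d (mat_app d M f) g + t * cinner d (mat_app d M g) f
      + t * cnj t * qform d M g"
    unfolding qform_def cinner_def sum.distrib sum_distrib_left ..
  finally show ?thesis .
qed

lemma scalar_prod_eq_qform:
  assumes "M \<in> carrier_mat d d" "v \<in> carrier_vec d"
  shows "(M *\<^sub>v v) \<bullet>c v = qform d M (\<lambda>i. v $ i)"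
  using assms unfolding qform_def cinner_mat_app_left
  by (auto simp: mult_mat_vec_def scalar_prod_def intro!: sum.cong)

lemma psd_iff_qform: "psd d M \<longleftrightarrow> M \<in> carrier_mat d d \<and> (\<forall>f. Im (qform d M f) = 0 \<and> 0 \<le> Re (qform d M f))"
proof
  assume a: "psd d M"
  then have c: "M \<in> carrier_mat d d" by (simp add: psd_def)
  show "M \<in> carrier_mat d d \<and> (\<forall>f. Im (qform d M f) = 0 \<and> 0 \<le> Re (qform d M f))"
  proof (intro conjI allI c)
    fix f :: "nat \<Rightarrow> complex"
    have v: "vec d f \<in> carrier_vec d" by simp
    have "qform d M f = qform d M (\<lambda>i. vec d f $ i)"
      unfolding qform_def cinner_mat_app_left by (auto intro!: sum.cong)
    then have "qform d M f = (M *\<^sub>v vec d f) \<bullet>c vec d f" using scalar_prod_eq_qform[OF c v] by simp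
    then show "Im (qform d M f) = 0" "0 \<le> Re (qform d M f)" using a v unfolding psd_def by auto
  qed
next
  assume "M \<in> carrier_mat d d \<and> (\<forall>f. Im (qform d M f) = 0 \<and> 0 \<le> Re (qform d M f))"
  then have c: "M \<in> carrier_mat d d" and q: "\<And>f. Im (qform d M f) = 0 \<and> 0 \<le> Re (qform d M f)"
    by auto
  show "psd d M" unfolding psd_def
  proof (intro conjI c ballI)
    fix v :: "complex vec" assume v: "v \<in> carrier_vec d"
    show "Im ((M *\<^sub>v v) \<bullet>c v) = 0" "Re ((M *\<^sub>v v) \<bullet>c v) \<ge> 0"
      unfolding scalar_prod_eq_qform[OF c v] using q by auto
  qed
qed

lemma psd_qform_real: "psd d M \<Longrightarrow> qform d M f = complex_of_real (Re (qform d M f))"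
proof -
  assume "psd d M"
  then have "Im (qform d M f) = 0" using psd_iff_qform by blast
  then show ?thesis by (simp add: complex_eq_iff)
qed
lemma psd_qform_nonneg: "psd d M \<Longrightarrow> 0 \<le> Re (qform d M f)"
  using psd_iff_qform by blast

lemma psd_hermitian_on:
  assumes "psd d M"
  shows "hermitian_on d M"
  unfolding hermitian_on_def
proof (intro allI impI)
  fix i j assume ij: "i < d" "j < d"
  have P: "\<And>f. Im (qform d M f) = 0" using assms psd_iff_qform by blast
  have di: "Im (M$$(i,i)) = 0" "Im (M$$(j,j)) = 0" using P[of "unit_fn i"] P[of "unit_fn j"] ij
    by (auto simp: qform_unit_fn)
  show "M$$(j,i) = cnj (M$$(i,j))"
  proof (cases "i = j")
    case True then show ?thesis using di by (simp add: complex_eq_iff)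
  next
    case False
    have e1: "qform d M (\<lambda>k. 1 * unit_fn i k + 1 * unit_fn j k)
        = M$$(i,i) + M$$(i,j) + M$$(j,i) + M$$(j,j)"
      using qform_lincomb_unit_fn[OF ij, of M 1 1] by simp
    have 1: "Im (M$$(i,j) + M$$(j,i)) = 0"
      using P[of "\<lambda>k. 1 * unit_fn i k + 1 * unit_fn j k"] di unfolding e1 by simp
    have e2: "qform d M (\<lambda>k. 1 * unit_fn i k + \<i> * unit_fn j k)
        = M$$(i,i) + \<i> * M$$(i,j) - \<i> * M$$(j,i) + M$$(j,j)"
      using qform_lincomb_unit_fn[OF ij, of M 1 \<i>] by (simp add: algebra_simps)
    have 2: "Re (M$$(i,j)) - Re (M$$(j,i)) = 0"
      using P[of "\<lambda>k. 1 * unit_fn i k + \<i> * unit_fn j k"] di unfolding e2 by simp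
    show ?thesis using 1 2 by (simp add: complex_eq_iff)
  qed
qed

lemma hermitian_on_cinner_mat_app:
  assumes "hermitian_on d X"
  shows "cinner d (mat_app d X f) g = cinner d f (mat_app d X g)"
proof -
  have "cinner d (mat_app d X f) g = (\<Sum>i<d. \<Sum>j<d. X$$(i,j) * f j * cnj (g i))"
    unfolding cinner_mat_app_left sum_distrib_right ..
  also have "\<dots> = (\<Sum>j<d. \<Sum>i<d. f j * (cnj (X$$(j,i)) * cnj (g i)))"
  proof (subst sum.swap, rule sum.cong[OF refl], rule sum.cong[OF refl])
    fix j i assume "j \<in> {..<d}" "i \<in> {..<d}"
    then have "X$$(i,j) = cnj (X$$(j,i))" using assms unfolding hermitian_on_def by blast
    then show "X$$(i,j) * f j * cnj (g i) = f j * (cnj (X$$(j,i)) * cnj (g i))" by simp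
  qed
  also have "\<dots> = cinner d f (mat_app d X g)"
    unfolding cinner_mat_app_right cnj_sum complex_cnj_mult sum_distrib_left ..
  finally show ?thesis .
qed

lemma nonneg_quadratic_imp_le_mult:
  fixes Qf Qg B :: real
  assumes "\<And>s. 0 \<le> Qf - 2 * s * B + s^2 * B * Qg" "0 \<le> Qf" "0 \<le> Qg" "0 \<le> B"
  shows "B \<le> Qf * Qg"
proof (cases "B = 0")
  case True then show ?thesis using assms by simp
next
  case False
  then have Bp: "B > 0" using assms by simp
  show ?thesis
  proof (cases "Qg = 0")
    case True
    have "0 \<le> Qf - 2 * ((Qf + 1) / (2 * B)) * B + ((Qf + 1) / (2 * B))^2 * B * Qg"
      by (rule assms(1))
    also have "\<dots> = Qf - 2 * ((Qf + 1) / (2 * B)) * B" using True by simp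
    also have "2 * ((Qf + 1) / (2 * B)) * B = Qf + 1" using Bp by simp
    finally show ?thesis by simp
  next
    case False
    then have Qp: "Qg > 0" using assms by simp
    have "0 \<le> Qf - 2 * (1/Qg) * B + (1/Qg)^2 * B * Qg" by (rule assms(1))
    also have "(1/Qg)^2 * B * Qg = B / Qg" using Qp by (simp add: power2_eq_square)
    also have "Qf - 2 * (1/Qg) * B + B / Qg = Qf - B / Qg" by simp
    finally have "B / Qg \<le> Qf" by simp
    then show ?thesis using Qp by (simp add: divide_le_eq mult.commute)
  qed
qed

lemma psd_cauchy_schwarz:
  assumes "psd d M"
  shows "(cmod (cinner d (mat_app d M f) g))^2 \<le> Re (qform d M f) * Re (qform d M g)"
proof -
  define b where "b = cinner d (mat_app d M f) g"
  have bg: "cinner d (mat_app d M g) f = cnj b"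
    unfolding b_def
    using hermitian_on_cinner_mat_app[OF psd_hermitian_on[OF assms], of g f] cinner_commute by metis
  have "\<And>s::real. 0 \<le> Re (qform d M f) - 2 * s * (cmod b)^2 + s^2 * (cmod b)^2 * Re (qform d M g)"
  proof -
    fix s :: real
    define t where "t = - (complex_of_real s * b)"
    have "0 \<le> Re (qform d M (\<lambda>i. f i + t * g i))" using psd_qform_nonneg[OF assms] .
    also have "qform d M (\<lambda>i. f i + t * g i)
        = qform d M f + cnj t * b + t * cnj b + t * cnj t * complex_of_real (Re (qform d M g))"
      unfolding qform_add_mult bg b_def using psd_qform_real[OF assms, of g] by simp
    also have "Re \<dots> = Re (qform d M f) - 2 * s * (cmod b)^2 + s^2 * (cmod b)^2 * Re (qform d M g)"
      unfolding t_def cmod_power2 by (simp add: algebra_simps power2_eq_square)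
    finally show "0 \<le> Re (qform d M f) - 2 * s * (cmod b)^2 + s^2 * (cmod b)^2 * Re (qform d M g)" .
  qed
  then show ?thesis unfolding b_def[symmetric]
    by (intro nonneg_quadratic_imp_le_mult) (auto intro: psd_qform_nonneg[OF assms])
qed

lemma psd_zero_diag_imp_zero:
  assumes "psd d R" "i < d" "j < d" "R$$(i,i) = 0"
  shows "R$$(j,i) = 0" "R$$(i,j) = 0"
proof -
  have "(cmod (cinner d (mat_app d R (unit_fn i)) (unit_fn j)))^2
      \<le> Re (qform d R (unit_fn i)) * Re (qform d R (unit_fn j))"
    by (rule psd_cauchy_schwarz[OF assms(1)])
  also have "\<dots> = 0" using assms by (simp add: qform_unit_fn)
  also have "cinner d (mat_app d R (unit_fn i)) (unit_fn j) = R$$(j,i)" using assms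
    by (simp add: cinner_unit_fn mat_app_unit_fn)
  finally show "R$$(j,i) = 0" by simp
  moreover have "R$$(i,j) = cnj (R$$(j,i))" using psd_hermitian_on[OF assms(1)] assms
    unfolding hermitian_on_def by blast
  ultimately show "R$$(i,j) = 0" by simp
qed

lemma psd_zero_diagonal_imp_zero:
  assumes "psd d R" "\<forall>i<d. R$$(i,i) = 0" "i < d" "j < d"
  shows "R$$(i,j) = 0"
  using psd_zero_diag_imp_zero(2)[OF assms(1) assms(3) assms(4)] assms by blast

definition rank1_sub :: "nat \<Rightarrow> complex mat \<Rightarrow> (nat \<Rightarrow> complex) \<Rightarrow> complex mat" where
  "rank1_sub d R w = mat d d (\<lambda>(k, l). R$$(k,l) - w k * cnj (w l))"

definition pivot_vec :: "complex mat \<Rightarrow> nat \<Rightarrow> nat \<Rightarrow> complex" where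
  "pivot_vec R i k = R$$(k,i) / complex_of_real (sqrt (Re (R$$(i,i))))"

lemma qform_rank1_sub:
  "qform d (rank1_sub d R w) f = qform d R f - complex_of_real ((cmod (cinner d w f))^2)"
proof -
  have app: "mat_app d (rank1_sub d R w) f a = mat_app d R f a - w a * cnj (cinner d w f)"
    if "a < d" for a
  proof -
    have "mat_app d (rank1_sub d R w) f a = (\<Sum>j<d. R$$(a,j) * f j - w a * (cnj (w j) * f j))"
      unfolding mat_app_less[OF that] rank1_sub_def using that
      by (intro sum.cong refl) (simp add: algebra_simps)
    also have "\<dots> = mat_app d R f a - w a * cnj (cinner d w f)"
      unfolding mat_app_less[OF that] cinner_def sum_subtractf cnj_sum sum_distrib_left
      by (simp add: mult.commute)
    finally show ?thesis .
  qed
  have "qform d (rank1_sub d R w) f =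
      (\<Sum>a<d. mat_app d R f a * cnj (f a) - cnj (cinner d w f) * (w a * cnj (f a)))"
    unfolding qform_def cinner_def[of d "mat_app d _ f"]
    by (intro sum.cong refl) (simp add: app algebra_simps)
  also have "\<dots> = qform d R f - cnj (cinner d w f) * cinner d w f"
    unfolding qform_def cinner_def sum_subtractf sum_distrib_left ..
  finally show ?thesis by (metis complex_norm_square mult.commute)
qed

lemma psd_diag_pos:
  assumes "psd d R" "i < d" "R$$(i,i) \<noteq> 0"
  obtains r where "r > 0" "R$$(i,i) = complex_of_real r"
proof -
  have "R$$(i,i) = complex_of_real (Re (R$$(i,i)))" "Re (R$$(i,i)) \<ge> 0"
    using psd_qform_real[OF assms(1), of "unit_fn i"] psd_qform_nonneg[OF assms(1), of "unit_fn i"] assms(2)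
    by (simp_all add: qform_unit_fn)
  with assms(3) that show ?thesis
    by (metis less_eq_real_def of_real_0)
qed

lemma psd_rank1_sub_pivot:
  assumes psd: "psd d R" and i: "i < d" "R$$(i,i) \<noteq> 0"
  shows "psd d (rank1_sub d R (pivot_vec R i))"
  unfolding psd_iff_qform
proof (intro conjI allI)
  show "rank1_sub d R (pivot_vec R i) \<in> carrier_mat d d"
    by (simp add: rank1_sub_def)
  fix f
  obtain r where r: "r > 0" "R$$(i,i) = complex_of_real r"
    using psd_diag_pos[OF psd i] .
  have "cinner d (pivot_vec R i) f
      = cinner d (mat_app d R (unit_fn i)) f / complex_of_real (sqrt r)"
    unfolding cinner_def pivot_vec_def mat_app_unit_fn[OF i(1)] sum_divide_distrib r(2)
    by (intro sum.cong refl) simp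
  then have "(cmod (cinner d (pivot_vec R i) f))^2
      = (cmod (cinner d (mat_app d R (unit_fn i)) f))^2 / r"
    using r by (simp add: norm_divide power_divide)
  also have "\<dots> \<le> Re (qform d R f)"
    using psd_cauchy_schwarz[OF psd, of "unit_fn i" f] i r
    by (simp add: qform_unit_fn divide_le_eq mult.commute)
  finally have "(cmod (cinner d (pivot_vec R i) f))^2 \<le> Re (qform d R f)" .
  moreover have "qform d (rank1_sub d R (pivot_vec R i)) f =
      complex_of_real (Re (qform d R f) - (cmod (cinner d (pivot_vec R i) f))^2)"
    unfolding qform_rank1_sub using psd_qform_real[OF psd, of f] by simp
  ultimately show "Im (qform d (rank1_sub d R (pivot_vec R i)) f) = 0"
    "0 \<le> Re (qform d (rank1_sub d R (pivot_vec R i)) f)" by simp_all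
qed

lemma diag_rank1_sub_pivot:
  assumes psd: "psd d R" and i: "i < d" "R$$(i,i) \<noteq> 0"
  shows "{k. k < d \<and> rank1_sub d R (pivot_vec R i) $$ (k,k) \<noteq> 0} \<subseteq> {k. k < d \<and> R$$(k,k) \<noteq> 0} - {i}"
proof
  fix k assume "k \<in> {k. k < d \<and> rank1_sub d R (pivot_vec R i) $$ (k,k) \<noteq> 0}"
  then have k: "k < d" and nz: "R$$(k,k) - pivot_vec R i k * cnj (pivot_vec R i k) \<noteq> 0"
    by (auto simp: rank1_sub_def)
  obtain r where r: "r > 0" "R$$(i,i) = complex_of_real r"
    using psd_diag_pos[OF psd i] .
  have "pivot_vec R i i * cnj (pivot_vec R i i) = complex_of_real (r * r / (sqrt r * sqrt r))"
    unfolding pivot_vec_def r(2) by (simp flip: of_real_mult)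
  then have "pivot_vec R i i * cnj (pivot_vec R i i) = R$$(i,i)"
    using r by simp
  then have "k \<noteq> i" using nz by auto
  moreover have "R$$(k,k) \<noteq> 0"
  proof
    assume "R$$(k,k) = 0"
    then have "pivot_vec R i k = 0"
      using psd_zero_diag_imp_zero(2)[OF psd k i(1)] by (simp add: pivot_vec_def)
    with nz \<open>R$$(k,k) = 0\<close> show False by simp
  qed
  ultimately show "k \<in> {k. k < d \<and> R$$(k,k) \<noteq> 0} - {i}" using k by simp
qed

text \<open>Each step of the induction removes a nonzero diagonal pivot, as in a Cholesky factorisation.\<close>

lemma psd_rank1_decomp:
  assumes "psd d R"
  shows "\<exists>(N::nat) w. \<forall>i<d. \<forall>j<d. R$$(i,j) = (\<Sum>k<N. w k i * cnj (w k j))"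
  using assms
proof (induction "card {i. i < d \<and> R$$(i,i) \<noteq> 0}" arbitrary: R rule: less_induct)
  case less
  show ?case
  proof (cases "\<forall>i<d. R$$(i,i) = 0")
    case True
    then have "\<forall>i<d. \<forall>j<d. R$$(i,j) = 0"
      using psd_zero_diagonal_imp_zero[OF less.prems True] by blast
    then show ?thesis by (intro exI[of _ 0]) simp
  next
    case False
    then obtain i where i: "i < d" "R$$(i,i) \<noteq> 0" by blast
    define R' where "R' = rank1_sub d R (pivot_vec R i)"
    have "card {k. k < d \<and> R'$$(k,k) \<noteq> 0} \<le> card ({k. k < d \<and> R$$(k,k) \<noteq> 0} - {i})"
      unfolding R'_def by (rule card_mono[OF _ diag_rank1_sub_pivot[OF less.prems i]]) simp
    also have "\<dots> < card {k. k < d \<and> R$$(k,k) \<noteq> 0}"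
      by (rule card_Diff1_less) (simp_all add: i)
    finally have "card {k. k < d \<and> R'$$(k,k) \<noteq> 0} < card {k. k < d \<and> R$$(k,k) \<noteq> 0}" .
    moreover have "psd d R'"
      unfolding R'_def by (rule psd_rank1_sub_pivot[OF less.prems i])
    ultimately obtain N :: nat and w where IH: "\<forall>k<d. \<forall>l<d. R'$$(k,l) = (\<Sum>m<N. w m k * cnj (w m l))"
      using less.hyps by blast
    define w' where "w' m = (if m < N then w m else pivot_vec R i)" for m
    have "R$$(k,l) = (\<Sum>m<Suc N. w' m k * cnj (w' m l))" if "k < d" "l < d" for k l
    proof -
      have "R$$(k,l) = R'$$(k,l) + pivot_vec R i k * cnj (pivot_vec R i l)"
        using that by (simp add: R'_def rank1_sub_def)
      then show ?thesis
        using IH that by (simp add: w'_def)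
    qed
    then show ?thesis by blast
  qed
qed

lemma psd_rank1_decompE:
  assumes "psd d R"
  obtains N :: nat and w where "\<And>k. in_dim d (w k)"
    and "\<forall>i<d. \<forall>j<d. R$$(i,j) = (\<Sum>k<N. w k i * cnj (w k j))"
proof -
  obtain N :: nat and w where w: "\<forall>i<d. \<forall>j<d. R$$(i,j) = (\<Sum>k<N. w k i * cnj (w k j))"
    using psd_rank1_decomp[OF assms] by blast
  define w' where "w' k i = (if i < d then w k i else 0)" for k i
  have "\<And>k. in_dim d (w' k)"
    unfolding w'_def in_dim_def by simp
  moreover have "\<forall>i<d. \<forall>j<d. R$$(i,j) = (\<Sum>k<N. w' k i * cnj (w' k j))"
    using w unfolding w'_def by simp
  ultimately show ?thesis by (rule that)
qed

lemma mtrace_mult_rank1_decomp: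
  assumes "R \<in> carrier_mat d d" "X \<in> carrier_mat d d"
    and "\<forall>i<d. \<forall>j<d. R$$(i,j) = (\<Sum>k<(N::nat). w k i * cnj (w k j))"
  shows "mtrace (R * X) = (\<Sum>k<N. qform d X (w k))"
proof -
  have "mtrace (R * X) = (\<Sum>i<d. \<Sum>j<d. R$$(i,j) * X$$(j,i))"
    unfolding mtrace_def using assms(1,2)
    by (intro sum.cong) (auto simp: scalar_prod_def intro!: sum.cong)
  also have "\<dots> = (\<Sum>i<d. \<Sum>j<d. \<Sum>k<N. X$$(j,i) * w k i * cnj (w k j))"
    using assms(3)
    by (intro sum.cong refl) (simp add: sum_distrib_left sum_distrib_right mult.commute mult.left_commute)
  also have "\<dots> = (\<Sum>k<N. \<Sum>j<d. \<Sum>i<d. X$$(j,i) * w k i * cnj (w k j))"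
    by (subst sum.swap, subst (2) sum.swap, subst sum.swap, rule refl)
  also have "\<dots> = (\<Sum>k<N. qform d X (w k))"
    unfolding qform_def cinner_mat_app_left sum_distrib_right ..
  finally show ?thesis .
qed

lemma sum_lessThan_mult_split:
  fixes g :: "nat \<Rightarrow> 'a::comm_monoid_add"
  shows "(\<Sum>i<n*m. g i) = (\<Sum>p<n. \<Sum>q<m. g (p*m+q))"
proof (induction n)
  case 0 then show ?case by simp
next
  case (Suc n)
  have "{..<Suc n * m} = {..<n*m} \<union> {n*m..<n*m+m}" by auto
  then have "(\<Sum>i<Suc n*m. g i) = (\<Sum>i<n*m. g i) + (\<Sum>i\<in>{n*m..<n*m+m}. g i)"
    by (simp add: sum.union_disjoint ivl_disj_int)
  also have "(\<Sum>i\<in>{n*m..<n*m+m}. g i) = (\<Sum>q<m. g (n*m+q))"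
    using sum.shift_bounds_nat_ivl[of g 0 "n*m" m] by (simp add: lessThan_atLeast0 add.commute)
  finally show ?case using Suc by simp
qed

lemma div_mod_eq_iff:
  assumes "(m::nat) > 0"
  shows "(j div m = a \<and> j mod m = b) \<longleftrightarrow> (j = a*m + b \<and> b < m)"
  using assms by (auto simp: mult.commute)

lemma kron_carrier: "A \<in> carrier_mat nA nA \<Longrightarrow> B \<in> carrier_mat nB nB \<Longrightarrow> kron A B \<in> carrier_mat (nA*nB) (nA*nB)"
  by (simp add: kron_def)

lemma kron_index: "i < dim_row A * dim_row B \<Longrightarrow> j < dim_col A * dim_col B \<Longrightarrow>
  kron A B $$ (i,j) = A $$ (i div dim_row B, j div dim_col B) * B $$ (i mod dim_row B, j mod dim_col B)"
  by (simp add: kron_def)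

lemma mod_less_of_less_mult: "(i::nat) < nA*nB \<Longrightarrow> i mod nB < nB"
  by (cases "nB = 0") auto

lemma mult_add_less_mult: "a < nA \<Longrightarrow> b < (nB::nat) \<Longrightarrow> a*nB + b < nA*nB"
proof -
  assume "a < nA" "b < nB"
  then have "a*nB + b < a*nB + nB" by simp
  also have "\<dots> = (a+1)*nB" by simp
  also have "\<dots> \<le> nA*nB" using \<open>a < nA\<close> by (intro mult_right_mono) auto
  finally show ?thesis .
qed

lemma nat_eq_iff_div_mod_eq: "(nB::nat) > 0 \<Longrightarrow> (i = j) \<longleftrightarrow> (i div nB = j div nB \<and> i mod nB = j mod nB)"
  by (metis div_mult_mod_eq)

lemma kron_id_right_mult_kron_id_left:
  assumes P: "P \<in> carrier_mat nA nA" and Q: "Q \<in> carrier_mat nB nB"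
  shows "kron P (1\<^sub>m nB) * kron (1\<^sub>m nA) Q = kron P Q"
proof (rule eq_matI)
  show "dim_row (kron P (1\<^sub>m nB) * kron (1\<^sub>m nA) Q) = dim_row (kron P Q)"
    "dim_col (kron P (1\<^sub>m nB) * kron (1\<^sub>m nA) Q) = dim_col (kron P Q)" using P Q
      by (simp_all add: kron_def)
  fix i l assume "i < dim_row (kron P Q)" "l < dim_col (kron P Q)"
  then have il: "i < nA*nB" "l < nA*nB" using P Q by (simp_all add: kron_def)
  then have m0: "nB > 0" by (cases nB) auto
  define j0 where "j0 = (l div nB) * nB + i mod nB"
  have j0: "j0 < nA*nB" unfolding j0_def
    by (rule mult_add_less_mult[OF less_mult_imp_div_less[OF il(2)] mod_less_of_less_mult[OF il(1)]])
  have "(kron P (1\<^sub>m nB) * kron (1\<^sub>m nA) Q) $$ (i,l)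
      = (\<Sum>j<nA*nB. kron P (1\<^sub>m nB) $$ (i,j) * kron (1\<^sub>m nA) Q $$ (j,l))"
    using P Q il by (simp add: kron_def scalar_prod_def lessThan_atLeast0)
  also have "\<dots> = (\<Sum>j<nA*nB. if j = j0 then P$$(i div nB, l div nB) * Q$$(i mod nB, l mod nB) else 0)"
  proof (rule sum.cong[OF refl])
    fix j assume "j \<in> {..<nA*nB}"
    then have j: "j < nA*nB" by simp
    have e: "kron P (1\<^sub>m nB) $$ (i,j) * kron (1\<^sub>m nA) Q $$ (j,l) =
      P$$(i div nB, j div nB) * (if i mod nB = j mod nB then 1 else 0) * ((if j div nB = l div nB then 1 else 0) * Q$$(j mod nB, l mod nB))"
      using P Q il j
      by (simp add: kron_index less_mult_imp_div_less mod_less_of_less_mult carrier_matD)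
    have "j = j0 \<longleftrightarrow> (j div nB = l div nB \<and> j mod nB = i mod nB)"
      unfolding j0_def using div_mod_eq_iff[OF m0] mod_less_of_less_mult[OF il(1)] by blast
    then show "kron P (1\<^sub>m nB) $$ (i,j) * kron (1\<^sub>m nA) Q $$ (j,l)
        = (if j = j0 then P$$(i div nB, l div nB) * Q$$(i mod nB, l mod nB) else 0)"
      unfolding e by auto
  qed
  also have "\<dots> = P$$(i div nB, l div nB) * Q$$(i mod nB, l mod nB)" using j0 by simp
  also have "\<dots> = kron P Q $$ (i,l)" using P Q il by (simp add: kron_index carrier_matD)
  finally show "(kron P (1\<^sub>m nB) * kron (1\<^sub>m nA) Q) $$ (i,l) = kron P Q $$ (i,l)" .
qed

lemma kron_id_left_mult_kron_id_right:
  assumes P: "P \<in> carrier_mat nA nA" and Q: "Q \<in> carrier_mat nB nB"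
  shows "kron (1\<^sub>m nA) Q * kron P (1\<^sub>m nB) = kron P Q"
proof (rule eq_matI)
  show "dim_row (kron (1\<^sub>m nA) Q * kron P (1\<^sub>m nB)) = dim_row (kron P Q)"
    "dim_col (kron (1\<^sub>m nA) Q * kron P (1\<^sub>m nB)) = dim_col (kron P Q)" using P Q
      by (simp_all add: kron_def)
  fix i l assume "i < dim_row (kron P Q)" "l < dim_col (kron P Q)"
  then have il: "i < nA*nB" "l < nA*nB" using P Q by (simp_all add: kron_def)
  then have m0: "nB > 0" by (cases nB) auto
  define j0 where "j0 = (i div nB) * nB + l mod nB"
  have j0: "j0 < nA*nB" unfolding j0_def
    by (rule mult_add_less_mult[OF less_mult_imp_div_less[OF il(1)] mod_less_of_less_mult[OF il(2)]])
  have "(kron (1\<^sub>m nA) Q * kron P (1\<^sub>m nB)) $$ (i,l)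
      = (\<Sum>j<nA*nB. kron (1\<^sub>m nA) Q $$ (i,j) * kron P (1\<^sub>m nB) $$ (j,l))"
    using P Q il by (simp add: kron_def scalar_prod_def lessThan_atLeast0)
  also have "\<dots> = (\<Sum>j<nA*nB. if j = j0 then P$$(i div nB, l div nB) * Q$$(i mod nB, l mod nB) else 0)"
  proof (rule sum.cong[OF refl])
    fix j assume "j \<in> {..<nA*nB}"
    then have j: "j < nA*nB" by simp
    have e: "kron (1\<^sub>m nA) Q $$ (i,j) * kron P (1\<^sub>m nB) $$ (j,l) =
      (if i div nB = j div nB then 1 else 0) * Q$$(i mod nB, j mod nB) * (P$$(j div nB, l div nB) * (if j mod nB = l mod nB then 1 else 0))"
      using P Q il j
      by (simp add: kron_index less_mult_imp_div_less mod_less_of_less_mult carrier_matD)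
    have "j = j0 \<longleftrightarrow> (j div nB = i div nB \<and> j mod nB = l mod nB)"
      unfolding j0_def using div_mod_eq_iff[OF m0] mod_less_of_less_mult[OF il(2)] by blast
    then show "kron (1\<^sub>m nA) Q $$ (i,j) * kron P (1\<^sub>m nB) $$ (j,l)
        = (if j = j0 then P$$(i div nB, l div nB) * Q$$(i mod nB, l mod nB) else 0)"
      unfolding e by auto
  qed
  also have "\<dots> = P$$(i div nB, l div nB) * Q$$(i mod nB, l mod nB)" using j0 by simp
  also have "\<dots> = kron P Q $$ (i,l)" using P Q il by (simp add: kron_index carrier_matD)
  finally show "(kron (1\<^sub>m nA) Q * kron P (1\<^sub>m nB)) $$ (i,l) = kron P Q $$ (i,l)" .
qed

lemma div_mod_mult_add: "(q::nat) < m \<Longrightarrow> (p*m+q) div m = p" "(q::nat) < m \<Longrightarrow> (p*m+q) mod m = q"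
  by auto

lemma sum_kron_id_right:
  assumes "finite L" "\<forall>l\<in>L. P l \<in> carrier_mat nA nA"
    "\<forall>i<nA. \<forall>j<nA. (\<Sum>l\<in>L. P l $$ (i,j)) = (if i = j then 1 else 0)" "i < nA*nB" "j < nA*nB"
  shows "(\<Sum>l\<in>L. kron (P l) (1\<^sub>m nB) $$ (i,j)) = (if i = j then 1 else 0)"
proof -
  have m0: "nB > 0" using assms(4) by (cases nB) auto
  have "(\<Sum>l\<in>L. kron (P l) (1\<^sub>m nB) $$ (i,j))
      = (\<Sum>l\<in>L. P l $$ (i div nB, j div nB)) * (if i mod nB = j mod nB then 1 else 0)"
    unfolding sum_distrib_right
  proof (rule sum.cong[OF refl])
    fix l assume "l \<in> L"
    then have "P l \<in> carrier_mat nA nA" using assms(2) by blast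
    then show "kron (P l) (1\<^sub>m nB) $$ (i,j)
        = P l $$ (i div nB, j div nB) * (if i mod nB = j mod nB then 1 else 0)"
      using assms(4,5) by (simp add: kron_index carrier_matD mod_less_of_less_mult)
  qed
  also have "\<dots> = (if i div nB = j div nB then 1 else 0) * (if i mod nB = j mod nB then 1 else 0)"
    using assms(3) less_mult_imp_div_less[OF assms(4)] less_mult_imp_div_less[OF assms(5)] by simp
  also have "\<dots> = (if i = j then 1 else 0)" using nat_eq_iff_div_mod_eq[OF m0, of i j] by auto
  finally show ?thesis .
qed

lemma sum_kron_id_left:
  assumes "finite L" "\<forall>l\<in>L. Q l \<in> carrier_mat nB nB"
    "\<forall>i<nB. \<forall>j<nB. (\<Sum>l\<in>L. Q l $$ (i,j)) = (if i = j then 1 else 0)" "i < nA*nB" "j < nA*nB"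
  shows "(\<Sum>l\<in>L. kron (1\<^sub>m nA) (Q l) $$ (i,j)) = (if i = j then 1 else 0)"
proof -
  have m0: "nB > 0" using assms(4) by (cases nB) auto
  have "(\<Sum>l\<in>L. kron (1\<^sub>m nA) (Q l) $$ (i,j))
      = (if i div nB = j div nB then 1 else 0) * (\<Sum>l\<in>L. Q l $$ (i mod nB, j mod nB))"
    unfolding sum_distrib_left
  proof (rule sum.cong[OF refl])
    fix l assume "l \<in> L"
    then have "Q l \<in> carrier_mat nB nB" using assms(2) by blast
    then show "kron (1\<^sub>m nA) (Q l) $$ (i,j)
        = (if i div nB = j div nB then 1 else 0) * Q l $$ (i mod nB, j mod nB)"
      using assms(4,5) by (simp add: kron_index carrier_matD less_mult_imp_div_less)
  qed
  also have "\<dots> = (if i div nB = j div nB then 1 else 0) * (if i mod nB = j mod nB then 1 else 0)"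
    using assms(3) mod_less_of_less_mult[OF assms(4)] mod_less_of_less_mult[OF assms(5)] by simp
  also have "\<dots> = (if i = j then 1 else 0)" using nat_eq_iff_div_mod_eq[OF m0, of i j] by auto
  finally show ?thesis .
qed

lemma qform_kron_id_right:
  assumes P: "P \<in> carrier_mat nA nA"
  shows "qform (nA*nB) (kron P (1\<^sub>m nB)) f = (\<Sum>q<nB. qform nA P (\<lambda>p. f (p*nB+q)))"
proof -
  have inner: "(\<Sum>j<nA*nB. kron P (1\<^sub>m nB) $$ (p*nB+q, j) * f j) = (\<Sum>p'<nA. P$$(p,p') * f (p'*nB+q))"
    if pq: "p < nA" "q < nB" for p q
  proof -
    have "(\<Sum>j<nA*nB. kron P (1\<^sub>m nB) $$ (p*nB+q, j) * f j) =
      (\<Sum>p'<nA. \<Sum>q'<nB. kron P (1\<^sub>m nB) $$ (p*nB+q, p'*nB+q') * f (p'*nB+q'))"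
      by (rule sum_lessThan_mult_split)
    also have "\<dots> = (\<Sum>p'<nA. \<Sum>q'<nB. if q' = q then P$$(p,p') * f (p'*nB+q) else 0)"
      using P pq mult_add_less_mult
      by (intro sum.cong refl) (auto simp: kron_index carrier_matD div_mod_mult_add)
    also have "\<dots> = (\<Sum>p'<nA. P$$(p,p') * f (p'*nB+q))"
      using pq by simp
    finally show ?thesis .
  qed
  have "qform (nA*nB) (kron P (1\<^sub>m nB)) f
      = (\<Sum>i<nA*nB. (\<Sum>j<nA*nB. kron P (1\<^sub>m nB) $$ (i, j) * f j) * cnj (f i))"
    unfolding qform_def cinner_mat_app_left ..
  also have "\<dots> = (\<Sum>p<nA. \<Sum>q<nB. (\<Sum>j<nA*nB. kron P (1\<^sub>m nB) $$ (p*nB+q, j) * f j) * cnj (f (p*nB+q)))"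
    by (rule sum_lessThan_mult_split)
  also have "\<dots> = (\<Sum>p<nA. \<Sum>q<nB. (\<Sum>p'<nA. P$$(p,p') * f (p'*nB+q)) * cnj (f (p*nB+q)))"
    using inner by (intro sum.cong refl) simp
  also have "\<dots> = (\<Sum>q<nB. \<Sum>p<nA. (\<Sum>p'<nA. P$$(p,p') * f (p'*nB+q)) * cnj (f (p*nB+q)))"
    by (rule sum.swap)
  also have "\<dots> = (\<Sum>q<nB. qform nA P (\<lambda>p. f (p*nB+q)))"
    unfolding qform_def cinner_mat_app_left ..
  finally show ?thesis .
qed

lemma qform_kron_id_left:
  assumes Q: "Q \<in> carrier_mat nB nB"
  shows "qform (nA*nB) (kron (1\<^sub>m nA) Q) f = (\<Sum>p<nA. qform nB Q (\<lambda>q. f (p*nB+q)))"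
proof -
  have inner: "(\<Sum>j<nA*nB. kron (1\<^sub>m nA) Q $$ (p*nB+q, j) * f j) = (\<Sum>q'<nB. Q$$(q,q') * f (p*nB+q'))"
    if pq: "p < nA" "q < nB" for p q
  proof -
    have "(\<Sum>j<nA*nB. kron (1\<^sub>m nA) Q $$ (p*nB+q, j) * f j) =
      (\<Sum>p'<nA. \<Sum>q'<nB. kron (1\<^sub>m nA) Q $$ (p*nB+q, p'*nB+q') * f (p'*nB+q'))"
      by (rule sum_lessThan_mult_split)
    also have "\<dots> = (\<Sum>p'<nA. if p' = p then (\<Sum>q'<nB. Q$$(q,q') * f (p*nB+q')) else 0)"
      using Q pq mult_add_less_mult
      by (intro sum.cong refl) (auto simp: kron_index carrier_matD div_mod_mult_add)
    also have "\<dots> = (\<Sum>q'<nB. Q$$(q,q') * f (p*nB+q'))"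
      using pq by simp
    finally show ?thesis .
  qed
  have "qform (nA*nB) (kron (1\<^sub>m nA) Q) f
      = (\<Sum>i<nA*nB. (\<Sum>j<nA*nB. kron (1\<^sub>m nA) Q $$ (i, j) * f j) * cnj (f i))"
    unfolding qform_def cinner_mat_app_left ..
  also have "\<dots> = (\<Sum>p<nA. \<Sum>q<nB. (\<Sum>j<nA*nB. kron (1\<^sub>m nA) Q $$ (p*nB+q, j) * f j) * cnj (f (p*nB+q)))"
    by (rule sum_lessThan_mult_split)
  also have "\<dots> = (\<Sum>p<nA. \<Sum>q<nB. (\<Sum>q'<nB. Q$$(q,q') * f (p*nB+q')) * cnj (f (p*nB+q)))"
    using inner by (intro sum.cong refl) simp
  also have "\<dots> = (\<Sum>p<nA. qform nB Q (\<lambda>q. f (p*nB+q)))"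
    unfolding qform_def cinner_mat_app_left ..
  finally show ?thesis .
qed

lemma psd_kron_id_right:
  assumes "psd nA P"
  shows "psd (nA*nB) (kron P (1\<^sub>m nB))"
proof -
  have P: "P \<in> carrier_mat nA nA" using assms psd_iff_qform by blast
  show ?thesis unfolding psd_iff_qform
  proof (intro conjI allI)
    show "kron P (1\<^sub>m nB) \<in> carrier_mat (nA * nB) (nA * nB)" using P by (simp add: kron_carrier)
    fix f
    show "Im (qform (nA * nB) (kron P (1\<^sub>m nB)) f) = 0"
      "0 \<le> Re (qform (nA * nB) (kron P (1\<^sub>m nB)) f)"
      unfolding qform_kron_id_right[OF P] using assms psd_iff_qform
      by (auto simp: Im_sum Re_sum intro!: sum.neutral sum_nonneg)
  qed
qed

lemma psd_kron_id_left:
  assumes "psd nB Q"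
  shows "psd (nA*nB) (kron (1\<^sub>m nA) Q)"
proof -
  have Q: "Q \<in> carrier_mat nB nB" using assms psd_iff_qform by blast
  show ?thesis unfolding psd_iff_qform
  proof (intro conjI allI)
    show "kron (1\<^sub>m nA) Q \<in> carrier_mat (nA * nB) (nA * nB)" using Q by (simp add: kron_carrier)
    fix f
    show "Im (qform (nA * nB) (kron (1\<^sub>m nA) Q) f) = 0"
      "0 \<le> Re (qform (nA * nB) (kron (1\<^sub>m nA) Q) f)"
      unfolding qform_kron_id_left[OF Q] using assms psd_iff_qform
      by (auto simp: Im_sum Re_sum intro!: sum.neutral sum_nonneg)
  qed
qed

lemma povm_psd: "povm d Outs E \<Longrightarrow> b \<in> Outs \<Longrightarrow> psd d (E b)"
  unfolding povm_def by blast

lemma povm_sum_eq_id: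
  "povm d Outs E \<Longrightarrow> \<forall>i<d. \<forall>j<d. (\<Sum>b\<in>Outs. E b $$ (i,j)) = (if i = j then 1 else 0)"
  unfolding povm_def by auto

lemma povm_kron_id_right:
  assumes "povm nA Outs P"
  shows "povm (nA * nB) Outs (\<lambda>b. kron (P b) (1\<^sub>m nB))"
proof -
  have "\<forall>b\<in>Outs. P b \<in> carrier_mat nA nA"
    using povm_psd[OF assms] psd_iff_qform by blast
  then show ?thesis
    using assms sum_kron_id_right[of Outs P nA _ nB] povm_sum_eq_id[OF assms]
    unfolding povm_def by (auto intro: psd_kron_id_right)
qed

lemma povm_kron_id_left:
  assumes "povm nB Outs Q"
  shows "povm (nA * nB) Outs (\<lambda>b. kron (1\<^sub>m nA) (Q b))"
proof -
  have "\<forall>b\<in>Outs. Q b \<in> carrier_mat nB nB"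
    using povm_psd[OF assms] psd_iff_qform by blast
  then show ?thesis
    using assms sum_kron_id_left[of Outs Q nB _ nA] povm_sum_eq_id[OF assms]
    unfolding povm_def by (auto intro: psd_kron_id_left)
qed

section \<open>Binary observables and the CHSH operator\<close>

definition binary_obs :: "nat \<Rightarrow> (nat \<Rightarrow> complex mat) \<Rightarrow> (nat \<Rightarrow> complex) \<Rightarrow> nat \<Rightarrow> complex" where
  "binary_obs d P f = (\<lambda>i. mat_app d (P 0) f i - mat_app d (P 1) f i)"

lemma povm_binary_sum:
  fixes P :: "nat \<Rightarrow> complex mat"
  assumes "povm d {0, 1} P" "in_dim d f"
  shows "mat_app d (P 0) f i + mat_app d (P 1) f i = f i"
  using sum_mat_app_eq_self[OF _ povm_sum_eq_id[OF assms(1)] assms(2), of i] by simp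

lemma povm_binary_psd:
  fixes P :: "nat \<Rightarrow> complex mat"
  shows "povm d {0, 1} P \<Longrightarrow> psd d (P 0)" "povm d {0, 1} P \<Longrightarrow> psd d (P 1)"
  by (simp_all add: povm_psd)

lemma in_dim_binary_obs: "in_dim d (binary_obs d P f)"
  unfolding binary_obs_def by (rule in_dim_diff[OF in_dim_mat_app in_dim_mat_app])

lemma binary_obs_lincomb:
  "binary_obs d P (\<lambda>i. a * u i + b * v i) = (\<lambda>i. a * binary_obs d P u i + b * binary_obs d P v i)"
  unfolding binary_obs_def mat_app_lincomb by (simp add: algebra_simps)

lemma cinner_binary_obs:
  assumes "povm d {0, 1} P"
  shows "cinner d (binary_obs d P f) g = cinner d f (binary_obs d P g)"
  unfolding binary_obs_def cinner_diff_left cinner_diff_right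
  using povm_binary_psd[OF assms, THEN psd_hermitian_on, THEN hermitian_on_cinner_mat_app] by simp

lemma binary_obs_mat_app_commute:
  assumes "E \<in> carrier_mat d d" "P 0 \<in> carrier_mat d d" "P 1 \<in> carrier_mat d d"
    and "E * P 0 = P 0 * E" "E * P 1 = P 1 * E"
  shows "binary_obs d P (mat_app d E f) = mat_app d E (binary_obs d P f)"
  unfolding binary_obs_def mat_app_diff
  using assms mat_app_mult[of E d "P _"] mat_app_mult[of "P _" d E] by metis

text \<open>In operator form this is (P 0)^2 \<le> P 0, which holds because 0 \<le> P 0 \<le> I.\<close>

lemma sqnorm_mat_app_le_qform:
  fixes P :: "nat \<Rightarrow> complex mat"
  assumes P: "povm d {0, 1} P" and f: "in_dim d f"
  shows "sqnorm d (mat_app d (P 0) f) \<le> Re (qform d (P 0) f)"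
proof -
  define u where "u = mat_app d (P 0) f"
  have "qform d (P 0) u + qform d (P 1) u
      = cinner d (\<lambda>i. 1 * mat_app d (P 0) u i + 1 * mat_app d (P 1) u i) u"
    unfolding qform_def cinner_lincomb_left by simp
  also have "(\<lambda>i. 1 * mat_app d (P 0) u i + 1 * mat_app d (P 1) u i) = u"
    using povm_binary_sum[OF P in_dim_mat_app] unfolding u_def by simp
  finally have "Re (qform d (P 0) u) + Re (qform d (P 1) u) = sqnorm d u"
    unfolding sqnorm_def by (metis plus_complex.sel(1))
  then have q0: "Re (qform d (P 0) u) \<le> sqnorm d u"
    using psd_qform_nonneg[OF povm_binary_psd(2)[OF P], of u] by simp
  have "cinner d (mat_app d (P 0) f) u = complex_of_real (sqnorm d u)"
    unfolding u_def by (rule cinner_self)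
  then have "(sqnorm d u)^2 \<le> Re (qform d (P 0) f) * Re (qform d (P 0) u)"
    using psd_cauchy_schwarz[OF povm_binary_psd(1)[OF P], of f u] by (simp add: sqnorm_nonneg)
  also have "\<dots> \<le> Re (qform d (P 0) f) * sqnorm d u"
    using q0 psd_qform_nonneg[OF povm_binary_psd(1)[OF P]] by (intro mult_left_mono) auto
  finally have "sqnorm d u * sqnorm d u \<le> Re (qform d (P 0) f) * sqnorm d u"
    by (simp add: power2_eq_square)
  then show ?thesis
    using sqnorm_nonneg[of d u] psd_qform_nonneg[OF povm_binary_psd(1)[OF P], of f] unfolding u_def
    by (cases "sqnorm d u = 0") (auto simp: mult_le_cancel_right)
qed

lemma sqnorm_binary_obs_le:
  assumes P: "povm d {0, 1} P" and f: "in_dim d f"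
  shows "sqnorm d (binary_obs d P f) \<le> sqnorm d f"
proof -
  define u where "u = mat_app d (P 0) f"
  have "binary_obs d P f = (\<lambda>i. u i - (f i - u i))"
    unfolding binary_obs_def u_def using povm_binary_sum[OF P f] by (auto simp: algebra_simps)
  then have "sqnorm d (binary_obs d P f)
      = sqnorm d u - 2 * Re (cinner d u (\<lambda>i. f i - u i)) + sqnorm d (\<lambda>i. f i - u i)"
    by (simp only: sqnorm_diff)
  also have "\<dots> = sqnorm d f + 4 * sqnorm d u - 4 * Re (cinner d u f)"
    unfolding sqnorm_diff cinner_diff_right using cinner_commute[of d f u] by (simp add: sqnorm_def)
  also have "cinner d u f = qform d (P 0) f"
    unfolding u_def qform_def ..
  finally show ?thesis
    using sqnorm_mat_app_le_qform[OF P f] unfolding u_def by simp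
qed

lemma binary_obs_twice:
  assumes P: "povm d {0, 1} P" and f: "in_dim d f"
    and eq: "sqnorm d (binary_obs d P f) = sqnorm d f"
  shows "binary_obs d P (binary_obs d P f) = f"
proof -
  let ?O = "binary_obs d P"
  have "sqnorm d (\<lambda>i. ?O (?O f) i - f i)
      = sqnorm d (?O (?O f)) - 2 * Re (cinner d (?O (?O f)) f) + sqnorm d f"
    by (rule sqnorm_diff)
  also have "cinner d (?O (?O f)) f = cinner d (?O f) (?O f)"
    by (rule cinner_binary_obs[OF P])
  also have "sqnorm d (?O (?O f)) - 2 * Re (cinner d (?O f) (?O f)) + sqnorm d f
      = sqnorm d (?O (?O f)) - sqnorm d f"
    using eq by (simp add: sqnorm_def)
  also have "\<dots> \<le> 0"
    using sqnorm_binary_obs_le[OF P in_dim_binary_obs[of d P f]] eq by simp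
  finally have "sqnorm d (\<lambda>i. ?O (?O f) i - f i) = 0"
    using sqnorm_nonneg by (metis antisym)
  then show ?thesis
    by (rule sqnorm_diff_eq_0_imp_eq[OF in_dim_binary_obs f])
qed

text \<open>The standard sum-of-squares certificate for Tsirelson's bound, with c = 1 / sqrt 2.\<close>

lemma chsh_sos_real:
  fixes c wr wi a0r a0i a1r a1i b0r b0i b1r b1i :: real
  assumes "c * c = 1/2"
  shows "4*c*(wr^2+wi^2)
      - ((b0r*a0r + b0i*a0i) + (b1r*a0r + b1i*a0i) + (b0r*a1r + b0i*a1i) - (b1r*a1r + b1i*a1i)) =
    c*((a0r - c*(b0r+b1r))^2 + (a0i - c*(b0i+b1i))^2
      + ((a1r - c*(b0r - b1r))^2 + (a1i - c*(b0i - b1i))^2)) +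
    c*(4*(wr^2+wi^2) - (a0r^2+a0i^2) - (a1r^2+a1i^2) - (b0r^2+b0i^2) - (b1r^2+b1i^2))"
proof -
  have h: "2 * c * c = 1" using assms by simp
  let ?B = "b0r^2+b0i^2+b1r^2+b1i^2"
  let ?X = "(b0r*a0r + b0i*a0i) + (b1r*a0r + b1i*a0i) + (b0r*a1r + b0i*a1i) - (b1r*a1r + b1i*a1i)"
  have "c*((a0r - c*(b0r+b1r))^2 + (a0i - c*(b0i+b1i))^2
      + ((a1r - c*(b0r - b1r))^2 + (a1i - c*(b0i - b1i))^2)) +
    c*(4*(wr^2+wi^2) - (a0r^2+a0i^2) - (a1r^2+a1i^2) - (b0r^2+b0i^2) - (b1r^2+b1i^2)) - (4*c*(wr^2+wi^2) - ?X)
    = (2*c*c - 1) * (c * ?B - ?X)"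
    by (simp add: power2_eq_square algebra_simps)
  then show ?thesis using h by simp
qed

lemma chsh_sos_complex:
  fixes w a0 a1 b0 b1 :: complex and c :: real
  assumes "c * c = 1/2"
  shows "4*c*(cmod w)^2 - Re (b0 * cnj a0 + b1 * cnj a0 + b0 * cnj a1 - b1 * cnj a1) =
    c*((cmod (a0 - complex_of_real c * (b0 + b1)))^2 + (cmod (a1 - complex_of_real c * (b0 - b1)))^2) +
    c*(4*(cmod w)^2 - (cmod a0)^2 - (cmod a1)^2 - (cmod b0)^2 - (cmod b1)^2)"
  using chsh_sos_real[OF assms, where wr="Re w" and wi="Im w" and a0r="Re a0" and a0i="Im a0"
      and a1r="Re a1" and a1i="Im a1" and b0r="Re b0" and b0i="Im b0" and b1r="Re b1" and b1i="Im b1"]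
  by (simp add: cmod_power2)

lemma chsh_sos_cinner:
  fixes w a0 a1 b0 b1 :: "nat \<Rightarrow> complex" and c :: real
  assumes "c * c = 1/2"
  shows "4*c*sqnorm d w - Re (cinner d b0 a0 + cinner d b1 a0 + cinner d b0 a1 - cinner d b1 a1) =
    c*(sqnorm d (\<lambda>i. a0 i - complex_of_real c * (b0 i + b1 i))
      + sqnorm d (\<lambda>i. a1 i - complex_of_real c * (b0 i - b1 i))) +
    c*(4*sqnorm d w - sqnorm d a0 - sqnorm d a1 - sqnorm d b0 - sqnorm d b1)"
proof -
  have "4*c*sqnorm d w - Re (cinner d b0 a0 + cinner d b1 a0 + cinner d b0 a1 - cinner d b1 a1) =
     (\<Sum>i<d. 4*c*(cmod (w i))^2
        - Re (b0 i * cnj (a0 i) + b1 i * cnj (a0 i) + b0 i * cnj (a1 i) - b1 i * cnj (a1 i)))"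
    unfolding sqnorm_eq_sum cinner_def
    by (simp only: sum_distrib_left sum.distrib[symmetric] sum_subtractf[symmetric] Re_sum)
  also have "\<dots> = (\<Sum>i<d. c*((cmod (a0 i - complex_of_real c * (b0 i + b1 i)))^2
        + (cmod (a1 i - complex_of_real c * (b0 i - b1 i)))^2) +
      c*(4*(cmod (w i))^2 - (cmod (a0 i))^2 - (cmod (a1 i))^2 - (cmod (b0 i))^2 - (cmod (b1 i))^2))"
    by (rule sum.cong[OF refl]) (rule chsh_sos_complex[OF assms])
  also have "\<dots> = c*(sqnorm d (\<lambda>i. a0 i - complex_of_real c * (b0 i + b1 i))
      + sqnorm d (\<lambda>i. a1 i - complex_of_real c * (b0 i - b1 i))) +
    c*(4*sqnorm d w - sqnorm d a0 - sqnorm d a1 - sqnorm d b0 - sqnorm d b1)"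
    unfolding sqnorm_eq_sum
    by (simp only: sum_distrib_left sum.distrib[symmetric] sum_subtractf[symmetric])
  finally show ?thesis .
qed

lemma inv_sqrt2: "(1 / sqrt 2) * (1 / sqrt 2) = (1 / 2 :: real)" "4 * (1 / sqrt 2) = 2 * sqrt (2 :: real)"
  by (simp_all add: field_simps)

locale commuting_binary_measurements =
  fixes d :: nat and PA QB :: "nat \<Rightarrow> nat \<Rightarrow> complex mat"
  assumes povm_PA: "x < 2 \<Longrightarrow> povm d {0, 1} (PA x)"
    and povm_QB: "y < 2 \<Longrightarrow> povm d {0, 1} (QB y)"
    and PA_QB_commute: "x < 2 \<Longrightarrow> a < 2 \<Longrightarrow> y < 2 \<Longrightarrow> b < 2 \<Longrightarrow> PA x a * QB y b = QB y b * PA x a"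
begin

abbreviation "Ao x \<equiv> binary_obs d (PA x)"
abbreviation "Bo y \<equiv> binary_obs d (QB y)"

definition chsh_form :: "(nat \<Rightarrow> complex) \<Rightarrow> real" where
  "chsh_form w = Re (cinner d (Bo 0 w) (Ao 0 w) + cinner d (Bo 1 w) (Ao 0 w)
     + cinner d (Bo 0 w) (Ao 1 w) - cinner d (Bo 1 w) (Ao 1 w))"

lemma PA_carrier: "x < 2 \<Longrightarrow> a < 2 \<Longrightarrow> PA x a \<in> carrier_mat d d"
  using povm_psd[OF povm_PA, of x a] psd_iff_qform by (auto simp: less_2_cases_iff)

lemma QB_carrier: "y < 2 \<Longrightarrow> b < 2 \<Longrightarrow> QB y b \<in> carrier_mat d d"
  using povm_psd[OF povm_QB, of y b] psd_iff_qform by (auto simp: less_2_cases_iff)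

lemma Ao_Bo_commute:
  assumes "x < 2" "y < 2"
  shows "Ao x (Bo y f) = Bo y (Ao x f)"
proof -
  have "mat_app d (PA x a) (mat_app d (QB y b) f) = mat_app d (QB y b) (mat_app d (PA x a) f)"
    if "a < 2" "b < 2" for a b
    using PA_QB_commute[OF assms(1) that(1) assms(2) that(2)]
      mat_app_mult[OF PA_carrier[OF assms(1) that(1)] QB_carrier[OF assms(2) that(2)]]
      mat_app_mult[OF QB_carrier[OF assms(2) that(2)] PA_carrier[OF assms(1) that(1)]]
    by metis
  then show ?thesis
    unfolding binary_obs_def mat_app_diff by (simp add: algebra_simps)
qed

lemma chsh_sos:
  "4 * c * sqnorm d w - chsh_form w =
    c * (sqnorm d (\<lambda>i. Ao 0 w i - complex_of_real c * (Bo 0 w i + Bo 1 w i))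
      + sqnorm d (\<lambda>i. Ao 1 w i - complex_of_real c * (Bo 0 w i - Bo 1 w i)))
    + c * (4 * sqnorm d w - sqnorm d (Ao 0 w) - sqnorm d (Ao 1 w) - sqnorm d (Bo 0 w) - sqnorm d (Bo 1 w))"
  if "c * c = 1 / 2"
  unfolding chsh_form_def by (rule chsh_sos_cinner[OF that])

lemma chsh_form_le:
  assumes w: "in_dim d w"
  shows "chsh_form w \<le> 2 * sqrt 2 * sqnorm d w"
proof -
  have le: "sqnorm d (Ao x w) \<le> sqnorm d w" "sqnorm d (Bo x w) \<le> sqnorm d w" if "x < 2" for x
    using sqnorm_binary_obs_le[OF povm_PA[OF that] w] sqnorm_binary_obs_le[OF povm_QB[OF that] w]
    by simp_all
  have "0 \<le> 4 * sqnorm d w - sqnorm d (Ao 0 w) - sqnorm d (Ao 1 w) - sqnorm d (Bo 0 w)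
      - sqnorm d (Bo 1 w)"
    using le[of 0] le[of 1] by simp
  then show ?thesis
    using chsh_sos[OF inv_sqrt2(1), of w] sqnorm_nonneg unfolding inv_sqrt2(2)
    by (smt (verit) divide_nonneg_nonneg mult_nonneg_nonneg real_sqrt_ge_zero)
qed

lemma chsh_form_eq_imp:
  assumes w: "in_dim d w" and eq: "chsh_form w = 2 * sqrt 2 * sqnorm d w"
  shows "Ao 0 w = (\<lambda>i. complex_of_real (1 / sqrt 2) * Bo 0 w i + complex_of_real (1 / sqrt 2) * Bo 1 w i)"
    and "Ao 1 w = (\<lambda>i. complex_of_real (1 / sqrt 2) * Bo 0 w i + - complex_of_real (1 / sqrt 2) * Bo 1 w i)"
    and "x < 2 \<Longrightarrow> sqnorm d (Ao x w) = sqnorm d w" and "y < 2 \<Longrightarrow> sqnorm d (Bo y w) = sqnorm d w"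
proof -
  define c :: real where "c = 1 / sqrt 2"
  have c: "c * c = 1 / 2" "4 * c = 2 * sqrt 2" "c > 0"
    using inv_sqrt2 by (simp_all add: c_def)
  let ?K0 = "sqnorm d (\<lambda>i. Ao 0 w i - complex_of_real c * (Bo 0 w i + Bo 1 w i))"
  let ?K1 = "sqnorm d (\<lambda>i. Ao 1 w i - complex_of_real c * (Bo 0 w i - Bo 1 w i))"
  let ?D = "4 * sqnorm d w - sqnorm d (Ao 0 w) - sqnorm d (Ao 1 w) - sqnorm d (Bo 0 w)
      - sqnorm d (Bo 1 w)"
  have le: "sqnorm d (Ao x w) \<le> sqnorm d w" "sqnorm d (Bo x w) \<le> sqnorm d w" if "x < 2" for x
    using sqnorm_binary_obs_le[OF povm_PA[OF that] w] sqnorm_binary_obs_le[OF povm_QB[OF that] w]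
    by simp_all
  have "c * (?K0 + ?K1) + c * ?D = 0"
    using chsh_sos[OF c(1), of w] eq unfolding c(2) by simp
  then have "?K0 + ?K1 + ?D = 0"
    using c(3) by (simp flip: distrib_left)
  then have z: "?K0 = 0" "?K1 = 0" "sqnorm d (Ao 0 w) = sqnorm d w" "sqnorm d (Ao 1 w) = sqnorm d w"
    "sqnorm d (Bo 0 w) = sqnorm d w" "sqnorm d (Bo 1 w) = sqnorm d w"
    using le[of 0] le[of 1] sqnorm_nonneg[of d]
    by (smt (verit) one_less_numeral_iff pos2 semiring_norm(76))+
  then show "x < 2 \<Longrightarrow> sqnorm d (Ao x w) = sqnorm d w" "y < 2 \<Longrightarrow> sqnorm d (Bo y w) = sqnorm d w"
    by (auto simp: less_2_cases_iff)
  have sums: "in_dim d (\<lambda>i. complex_of_real c * (Bo 0 w i + Bo 1 w i))"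
    "in_dim d (\<lambda>i. complex_of_real c * (Bo 0 w i - Bo 1 w i))"
    using in_dim_binary_obs[of d "QB 0" w] in_dim_binary_obs[of d "QB 1" w] unfolding in_dim_def
    by auto
  have "Ao 0 w = (\<lambda>i. complex_of_real c * (Bo 0 w i + Bo 1 w i))"
    by (rule sqnorm_diff_eq_0_imp_eq[OF in_dim_binary_obs sums(1) z(1)])
  then show "Ao 0 w = (\<lambda>i. complex_of_real (1 / sqrt 2) * Bo 0 w i + complex_of_real (1 / sqrt 2) * Bo 1 w i)"
    unfolding c_def by (simp only: distrib_left)
  have "Ao 1 w = (\<lambda>i. complex_of_real c * (Bo 0 w i - Bo 1 w i))"
    by (rule sqnorm_diff_eq_0_imp_eq[OF in_dim_binary_obs sums(2) z(2)])
  then show "Ao 1 w = (\<lambda>i. complex_of_real (1 / sqrt 2) * Bo 0 w i + - complex_of_real (1 / sqrt 2) * Bo 1 w i)"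
    unfolding c_def
    by (simp only: diff_conv_add_uminus distrib_left mult_minus_right mult_minus_left)
qed

lemma Ao_anticommute:
  assumes w: "in_dim d w" and eq: "chsh_form w = 2 * sqrt 2 * sqnorm d w"
  shows "Ao 0 (Ao 1 w) i + Ao 1 (Ao 0 w) i = 0"
proof -
  note A = chsh_form_eq_imp(1,2)[OF w eq]
  have B0: "Bo 0 (Bo 0 w) = w" and B1: "Bo 1 (Bo 1 w) = w"
    using binary_obs_twice[OF povm_QB w chsh_form_eq_imp(4)[OF w eq]] by simp_all
  have C00: "Ao 0 (Bo 0 w) = Bo 0 (Ao 0 w)" and C01: "Ao 0 (Bo 1 w) = Bo 1 (Ao 0 w)"
    and C10: "Ao 1 (Bo 0 w) = Bo 0 (Ao 1 w)" and C11: "Ao 1 (Bo 1 w) = Bo 1 (Ao 1 w)"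
    by (simp_all add: Ao_Bo_commute)
  show ?thesis
    unfolding A binary_obs_lincomb C00 C01 C10 C11
    unfolding A[symmetric]
    unfolding A binary_obs_lincomb B0 B1
    by (simp add: algebra_simps)
qed

text \<open>(\<alpha> A0 + \<beta> A1)^2 = \<alpha>^2 + \<beta>^2 + \<alpha> \<beta> (A0 A1 + A1 A0), and the anticommutator vanishes on w.\<close>

lemma Ao_lincomb_twice:
  assumes w: "in_dim d w" and eq: "chsh_form w = 2 * sqrt 2 * sqnorm d w" and ab: "\<alpha>^2 + \<beta>^2 = 1"
  defines "m \<equiv> \<lambda>i. complex_of_real \<alpha> * Ao 0 w i + complex_of_real \<beta> * Ao 1 w i"
  shows "(\<lambda>i. complex_of_real \<alpha> * Ao 0 m i + complex_of_real \<beta> * Ao 1 m i) = w"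
proof
  fix i
  let ?a = "complex_of_real \<alpha>" and ?b = "complex_of_real \<beta>"
  have A0: "Ao 0 (Ao 0 w) = w" and A1: "Ao 1 (Ao 1 w) = w"
    using binary_obs_twice[OF povm_PA w chsh_form_eq_imp(3)[OF w eq]] by simp_all
  have "?a * Ao 0 m i + ?b * Ao 1 m i
      = (?a * ?a + ?b * ?b) * w i + (?a * ?b) * (Ao 0 (Ao 1 w) i + Ao 1 (Ao 0 w) i)"
    unfolding m_def binary_obs_lincomb A0 A1 by (simp add: algebra_simps)
  also have "\<dots> = w i"
    using Ao_anticommute[OF w eq] ab by (simp add: power2_eq_square flip: of_real_mult of_real_add)
  finally show "?a * Ao 0 m i + ?b * Ao 1 m i = w i" .
qed

lemma commuting_effect_bound:
  assumes w: "in_dim d w" and eq: "chsh_form w = 2 * sqrt 2 * sqnorm d w"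
    and E: "psd d E" and E_commute: "\<And>x a. x < 2 \<Longrightarrow> a < 2 \<Longrightarrow> E * PA x a = PA x a * E"
    and ab: "\<alpha>^2 + \<beta>^2 = 1"
  shows "cmod (complex_of_real \<alpha> * cinner d (mat_app d E (Ao 0 w)) w
    + complex_of_real \<beta> * cinner d (mat_app d E (Ao 1 w)) w) \<le> Re (qform d E w)"
proof -
  define m where "m = (\<lambda>i. complex_of_real \<alpha> * Ao 0 w i + complex_of_real \<beta> * Ao 1 w i)"
  have EC: "E \<in> carrier_mat d d" using E psd_iff_qform by blast
  have A_E: "Ao x (mat_app d E f) = mat_app d E (Ao x f)" if "x < 2" for x f
    using binary_obs_mat_app_commute[OF EC PA_carrier PA_carrier E_commute E_commute] that by simp
  have A_herm: "cinner d (Ao x f) g = cinner d f (Ao x g)" if "x < 2" for x f g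
    by (rule cinner_binary_obs[OF povm_PA[OF that]])
  have "qform d E m = cinner d (mat_app d E m) m" unfolding qform_def ..
  also have "\<dots> = complex_of_real \<alpha> * cinner d (mat_app d E m) (Ao 0 w)
      + complex_of_real \<beta> * cinner d (mat_app d E m) (Ao 1 w)"
    by (subst (2) m_def) (simp add: cinner_lincomb_right)
  also have "\<dots> = complex_of_real \<alpha> * cinner d (Ao 0 (mat_app d E m)) w
      + complex_of_real \<beta> * cinner d (Ao 1 (mat_app d E m)) w"
    using A_herm[of 0 "mat_app d E m" w] A_herm[of 1 "mat_app d E m" w] by simp
  also have "\<dots> = cinner d (mat_app d E (\<lambda>i. complex_of_real \<alpha> * Ao 0 m i + complex_of_real \<beta> * Ao 1 m i)) w"
    using A_E[of 0 m] A_E[of 1 m] by (simp add: mat_app_lincomb cinner_lincomb_left)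
  also have "\<dots> = qform d E w"
    using Ao_lincomb_twice[OF w eq ab] unfolding m_def qform_def by simp
  finally have "Re (qform d E m) = Re (qform d E w)" by simp
  then have "(cmod (cinner d (mat_app d E m) w))^2 \<le> (Re (qform d E w))^2"
    using psd_cauchy_schwarz[OF E, of m w] by (simp add: power2_eq_square)
  then have "cmod (cinner d (mat_app d E m) w) \<le> Re (qform d E w)"
    using psd_qform_nonneg[OF E, of w] by (rule power2_le_imp_le)
  then show ?thesis
    unfolding m_def mat_app_lincomb cinner_lincomb_left .
qed

end

section \<open>Saturating the long-path correlators\<close>

lemma sin_theta_diff_neq_0:
  assumes "y1 < n" "y2 < n" "y1 \<noteq> y2"
  shows "sin (theta n y1 - theta n y2) \<noteq> 0"
proof
  assume "sin (theta n y1 - theta n y2) = 0"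
  then obtain k :: int where k: "theta n y1 - theta n y2 = real_of_int k * pi"
    by (auto simp: sin_zero_iff_int2)
  have n0: "real n > 0" using assms by simp
  have "(real y1 - real y2) * pi / real n = real_of_int k * pi"
  proof -
    have "(real y1 - real y2) * pi / real n = theta n y1 - theta n y2"
      unfolding theta_def by (simp add: diff_divide_distrib left_diff_distrib)
    then show ?thesis using k by simp
  qed
  then have "(real y1 - real y2) * pi = real_of_int k * pi * real n" using n0
    by (simp add: divide_eq_eq)
  then have "(real y1 - real y2) * pi = (real_of_int k * real n) * pi"
    by (simp add: mult.commute mult.left_commute)
  then have e: "real y1 - real y2 = real_of_int k * real n" by simp
  have "\<bar>real y1 - real y2\<bar> < real n" using assms by linarith
  then have "\<bar>real_of_int k\<bar> * real n < 1 * real n" unfolding e by (simp add: abs_mult)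
  then have "\<bar>real_of_int k\<bar> < 1" using n0 by (simp only: mult_less_cancel_right)
  then have "k = 0" by linarith
  then show False using e assms by simp
qed

lemma theta_aligned_imp_zero:
  assumes "y1 < n" "y2 < n" "y1 \<noteq> y2"
    and h1: "r0 * sin (theta n y1) = r1 * cos (theta n y1)"
    and h2: "r0 * sin (theta n y2) = r1 * cos (theta n y2)"
  shows "r0 = 0 \<and> r1 = 0"
proof -
  let ?s1 = "sin (theta n y1)" and ?c1 = "cos (theta n y1)" and ?s2 = "sin (theta n y2)" and ?c2 = "cos (theta n y2)"
  have S: "sin (theta n y1 - theta n y2) = ?s1 * ?c2 - ?c1 * ?s2" by (rule sin_diff)
  have "r0 * (?s1 * ?c2 - ?c1 * ?s2) = (r0 * ?s1) * ?c2 - ?c1 * (r0 * ?s2)"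
    by (simp add: algebra_simps)
  also have "\<dots> = 0" unfolding h1 h2 by (simp add: algebra_simps)
  finally have a: "r0 * sin (theta n y1 - theta n y2) = 0" unfolding S .
  have "r1 * (?s1 * ?c2 - ?c1 * ?s2) = ?s1 * (r1 * ?c2) - ?s2 * (r1 * ?c1)"
    by (simp add: algebra_simps)
  also have "\<dots> = 0" unfolding h1[symmetric] h2[symmetric] by (simp add: algebra_simps)
  finally have b: "r1 * sin (theta n y1 - theta n y2) = 0" unfolding S .
  show ?thesis using a b sin_theta_diff_neq_0[OF assms(1-3)] by simp
qed

lemma unit_bound_attained_imp_aligned:
  fixes r0 r1 q g s c :: real
  assumes bound: "\<And>\<alpha> \<beta>. \<alpha>^2 + \<beta>^2 = 1 \<Longrightarrow> \<bar>\<alpha> * r0 + \<beta> * r1\<bar> \<le> q"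
    and g: "g = c * r0 + s * r1" and sc: "s^2 + c^2 = 1" and gq: "\<bar>g\<bar> = q" and q: "q > 0"
  shows "r0 * s = r1 * c"
proof -
  define \<rho> where "\<rho> = sqrt (r0^2 + r1^2)"
  have rr: "\<rho>^2 = r0^2 + r1^2" unfolding \<rho>_def by simp
  have lag: "g^2 + (r0 * s - r1 * c)^2 = \<rho>^2"
  proof -
    have "g^2 + (r0 * s - r1 * c)^2 = (r0^2 + r1^2) * (s^2 + c^2)" unfolding g
      by (simp add: power2_eq_square algebra_simps)
    then show ?thesis using sc rr by simp
  qed
  have "\<rho> \<le> q"
  proof (cases "\<rho> = 0")
    case True then show ?thesis using q by simp
  next
    case False
    have "\<rho> \<ge> 0" unfolding \<rho>_def by simp
    then have rp: "\<rho> > 0" using False by linarith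
    have "\<rho>^2 > 0" using rp by simp
    then have nz: "r0^2 + r1^2 > 0" using rr by simp
    have "(r0/\<rho>)^2 + (r1/\<rho>)^2 = (r0^2 + r1^2) / \<rho>^2" by (simp add: power_divide add_divide_distrib)
    also have "\<dots> = 1" unfolding rr by (rule divide_self) (use nz in linarith)
    finally have "(r0/\<rho>)^2 + (r1/\<rho>)^2 = 1" .
    then have "\<bar>(r0/\<rho>) * r0 + (r1/\<rho>) * r1\<bar> \<le> q" by (rule bound)
    also have "(r0/\<rho>) * r0 + (r1/\<rho>) * r1 = \<rho>" using rr rp
      by (simp add: power2_eq_square field_simps)
    finally show ?thesis using rp by simp
  qed
  moreover have "0 \<le> \<rho>" unfolding \<rho>_def by simp
  ultimately have "\<rho>^2 \<le> q^2" by (intro power_mono)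
  moreover have "g^2 = q^2" using gq by (metis power2_abs)
  ultimately have "(r0 * s - r1 * c)^2 \<le> 0" using lag by linarith
  then show ?thesis by simp
qed

lemma sum_le_1_of_unique_pos:
  fixes t :: "nat \<Rightarrow> real"
  assumes t: "\<And>y. y < n \<Longrightarrow> 0 \<le> t y \<and> t y \<le> 1"
    and unique: "\<And>y1 y2. y1 < n \<Longrightarrow> y2 < n \<Longrightarrow> t y1 > 0 \<Longrightarrow> t y2 > 0 \<Longrightarrow> y1 = y2"
  shows "(\<Sum>y<n. t y) \<le> 1"
proof (cases "\<exists>y0<n. t y0 > 0")
  case True
  then obtain y0 where y0: "y0 < n" "t y0 > 0" by blast
  have "t y = (if y = y0 then t y0 else 0)" if "y < n" for y
  proof (cases "y = y0")
    case False
    then have "\<not> t y > 0" using unique[OF that y0(1) _ y0(2)] by blast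
    then show ?thesis using t[OF that] False by simp
  qed simp
  then have "(\<Sum>y<n. t y) = (\<Sum>y<n. if y = y0 then t y0 else 0)"
    by (intro sum.cong) auto
  also have "\<dots> = t y0"
    using y0(1) by simp
  finally show ?thesis using t[OF y0(1)] by simp
next
  case False
  then have "\<forall>y<n. t y = 0" using t by force
  then show ?thesis by simp
qed

lemma theta_weights_sum_le_1:
  fixes t c :: "nat \<Rightarrow> real"
  assumes t: "\<And>y. y < n \<Longrightarrow> 0 \<le> t y \<and> t y \<le> 1"
    and c: "\<And>y. y < n \<Longrightarrow> \<bar>c y\<bar> \<le> t y"
    and bound: "\<And>\<alpha> \<beta>. \<alpha>^2 + \<beta>^2 = 1 \<Longrightarrow> \<bar>\<alpha> * r0 + \<beta> * r1\<bar> \<le> q"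
    and eq: "\<And>y. y < n \<Longrightarrow> t y * q = c y * (cos (theta n y) * r0 + sin (theta n y) * r1)"
  shows "(\<Sum>y<n. t y) * q \<le> q"
proof (cases "q > 0")
  case False
  moreover have "0 \<le> q"
    using bound[of 1 0] by simp
  ultimately show ?thesis by simp
next
  case q: True
  let ?g = "\<lambda>y. cos (theta n y) * r0 + sin (theta n y) * r1"
  have g_le: "\<bar>?g y\<bar> \<le> q" for y
    by (rule bound) (simp add: add.commute)
  have aligned: "r0 * sin (theta n y) = r1 * cos (theta n y)" if y: "y < n" "t y > 0" for y
  proof -
    have "t y * q = c y * ?g y"
      by (rule eq[OF y(1)])
    also have "\<dots> \<le> \<bar>c y\<bar> * \<bar>?g y\<bar>"
      by (simp flip: abs_mult)
    also have "\<dots> \<le> t y * \<bar>?g y\<bar>"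
      using c[OF y(1)] by (intro mult_right_mono) auto
    finally have "t y * q \<le> t y * \<bar>?g y\<bar>" .
    then have "\<bar>?g y\<bar> = q"
      using g_le[of y] y(2) by (simp add: mult_le_cancel_left_pos)
    from unit_bound_attained_imp_aligned[OF bound refl sin_cos_squared_add[of "theta n y"] this q]
    show ?thesis .
  qed
  have unique: "y1 = y2" if "y1 < n" "y2 < n" "t y1 > 0" "t y2 > 0" for y1 y2
  proof (rule ccontr)
    assume "y1 \<noteq> y2"
    then have "r0 = 0 \<and> r1 = 0"
      using theta_aligned_imp_zero[OF that(1,2)] aligned[OF that(1,3)] aligned[OF that(2,4)]
      by blast
    then have "t y1 * q = 0" using eq[OF that(1)] by simp
    with that(3) q show False by simp
  qed
  have "(\<Sum>y<n. t y) \<le> 1"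
    by (rule sum_le_1_of_unique_pos[OF t unique])
  then show ?thesis using q by simp
qed

text \<open>Each hidden variable l can saturate the bound of the long-path correlator for at most one
  input y, since distinct angles theta n y differ by less than pi; hence its weight is spent at most once.\<close>

lemma theta_double_sum_le_1:
  fixes t c :: "nat \<Rightarrow> 'l \<Rightarrow> real" and q r0 r1 :: "'l \<Rightarrow> real"
  assumes fin: "finite L"
    and t: "\<And>y l. y < n \<Longrightarrow> l \<in> L \<Longrightarrow> 0 \<le> t y l \<and> t y l \<le> 1"
    and c: "\<And>y l. y < n \<Longrightarrow> l \<in> L \<Longrightarrow> \<bar>c y l\<bar> \<le> t y l"
    and q: "\<And>l. l \<in> L \<Longrightarrow> 0 \<le> q l" and q_sum: "(\<Sum>l\<in>L. q l) = 1"
    and bound: "\<And>l \<alpha> \<beta>. l \<in> L \<Longrightarrow> \<alpha>^2 + \<beta>^2 = 1 \<Longrightarrow> \<bar>\<alpha> * r0 l + \<beta> * r1 l\<bar> \<le> q l"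
    and eq: "(\<Sum>y<n. \<Sum>l\<in>L. c y l * (cos (theta n y) * r0 l + sin (theta n y) * r1 l))
      = (\<Sum>y<n. \<Sum>l\<in>L. t y l * q l)"
  shows "(\<Sum>y<n. \<Sum>l\<in>L. t y l * q l) \<le> 1"
proof -
  define gap where "gap y l
      = t y l * q l - c y l * (cos (theta n y) * r0 l + sin (theta n y) * r1 l)" for y l
  have gap_nonneg: "0 \<le> gap y l" if "y < n" "l \<in> L" for y l
  proof -
    have "\<bar>cos (theta n y) * r0 l + sin (theta n y) * r1 l\<bar> \<le> q l"
      by (rule bound[OF that(2)]) (simp add: add.commute)
    then show ?thesis
      unfolding gap_def using c[OF that] abs_le_iff
      by (smt (verit, best) abs_mult mult_mono abs_ge_zero)
  qed
  have "(\<Sum>y<n. \<Sum>l\<in>L. gap y l) = 0"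
    using eq unfolding gap_def by (simp add: sum_subtractf)
  then have "\<forall>y\<in>{..<n}. (\<Sum>l\<in>L. gap y l) = 0"
    using gap_nonneg by (subst (asm) sum_nonneg_eq_0_iff) (auto intro: sum_nonneg)
  then have "gap y l = 0" if "y < n" "l \<in> L" for y l
    using that gap_nonneg fin by (simp add: sum_nonneg_eq_0_iff)
  then have saturated: "t y l * q l = c y l * (cos (theta n y) * r0 l + sin (theta n y) * r1 l)"
    if "y < n" "l \<in> L" for y l
    using that unfolding gap_def by simp
  have "(\<Sum>y<n. \<Sum>l\<in>L. t y l * q l) = (\<Sum>l\<in>L. (\<Sum>y<n. t y l) * q l)"
    by (subst sum.swap) (simp add: sum_distrib_right)
  also have "\<dots> \<le> (\<Sum>l\<in>L. q l)"
  proof (rule sum_mono)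
    fix l assume l: "l \<in> L"
    show "(\<Sum>y<n. t y l) * q l \<le> q l"
      by (rule theta_weights_sum_le_1[OF t[OF _ l] c[OF _ l] bound[OF l] saturated[OF _ l]])
  qed
  finally show ?thesis using q_sum by simp
qed

section \<open>Short-range quantum models\<close>

text \<open>The state is given as \<rho> = \<Sum>k. |w k\<rangle>\<langle>w k| (psd_rank1_decompE); PA, QB and EE are Alice's
  effects and the effects of Bob's short-path and long-path devices, lifted to C^(dA * dB).\<close>

locale srq_model =
  fixes dA dB :: nat and \<rho> :: "complex mat" and N :: nat and w :: "nat \<Rightarrow> nat \<Rightarrow> complex"
    and A BS :: "nat \<Rightarrow> nat \<Rightarrow> complex mat" and E :: "nat \<Rightarrow> complex mat" and \<Lambda> :: "nat set"
  assumes rho_carrier: "\<rho> \<in> carrier_mat (dA * dB) (dA * dB)"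
    and trace_rho: "mtrace \<rho> = 1"
    and rho_decomp: "\<forall>i<dA * dB. \<forall>j<dA * dB. \<rho>$$(i,j) = (\<Sum>k<N. w k i * cnj (w k j))"
    and in_dim_w: "in_dim (dA * dB) (w k)"
    and povm_A: "x < 2 \<Longrightarrow> povm dA {0, 1} (A x)"
    and povm_BS: "y < 2 \<Longrightarrow> povm dB {0, 1} (BS y)"
    and povm_E: "povm dB \<Lambda> E"
begin

definition PA :: "nat \<Rightarrow> nat \<Rightarrow> complex mat" where
  "PA x = (\<lambda>a. kron (A x a) (1\<^sub>m dB))"

definition QB :: "nat \<Rightarrow> nat \<Rightarrow> complex mat" where
  "QB y = (\<lambda>b. kron (1\<^sub>m dA) (BS y b))"

definition EE :: "nat \<Rightarrow> complex mat" where
  "EE = (\<lambda>l. kron (1\<^sub>m dA) (E l))"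

text \<open>lambda_prob l is the probability of the long-path device's internal outcome l, and
  lambda_corr x l the (unnormalised) correlator of Alice's observable x with that outcome.\<close>

definition lambda_prob :: "nat \<Rightarrow> real" where
  "lambda_prob l = Re (mtrace (\<rho> * kron (1\<^sub>m dA) (E l)))"

definition lambda_corr :: "nat \<Rightarrow> nat \<Rightarrow> real" where
  "lambda_corr x l = (\<Sum>a<2. (-1) ^ a * Re (mtrace (\<rho> * kron (A x a) (E l))))"

lemma A_carrier: "x < 2 \<Longrightarrow> a < 2 \<Longrightarrow> A x a \<in> carrier_mat dA dA"
  using povm_psd[OF povm_A, of x a] psd_iff_qform by (auto simp: less_2_cases_iff)

lemma BS_carrier: "y < 2 \<Longrightarrow> b < 2 \<Longrightarrow> BS y b \<in> carrier_mat dB dB"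
  using povm_psd[OF povm_BS, of y b] psd_iff_qform by (auto simp: less_2_cases_iff)

lemma E_carrier: "l \<in> \<Lambda> \<Longrightarrow> E l \<in> carrier_mat dB dB"
  using povm_psd[OF povm_E] psd_iff_qform by blast

lemma PA_mult_kron_id_left:
  "x < 2 \<Longrightarrow> a < 2 \<Longrightarrow> Y \<in> carrier_mat dB dB \<Longrightarrow> PA x a * kron (1\<^sub>m dA) Y = kron (A x a) Y"
  "x < 2 \<Longrightarrow> a < 2 \<Longrightarrow> Y \<in> carrier_mat dB dB \<Longrightarrow> kron (1\<^sub>m dA) Y * PA x a = kron (A x a) Y"
  unfolding PA_def
  by (simp_all add: A_carrier kron_id_right_mult_kron_id_left kron_id_left_mult_kron_id_right)

sublocale commuting_binary_measurements "dA * dB" PA QB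
proof
  show "povm (dA * dB) {0, 1} (PA x)" if "x < 2" for x
    unfolding PA_def by (rule povm_kron_id_right[OF povm_A[OF that]])
  show "povm (dA * dB) {0, 1} (QB y)" if "y < 2" for y
    unfolding QB_def by (rule povm_kron_id_left[OF povm_BS[OF that]])
  show "PA x a * QB y b = QB y b * PA x a" if "x < 2" "a < 2" "y < 2" "b < 2" for x a y b
    unfolding QB_def using PA_mult_kron_id_left that BS_carrier by simp
qed

lemma mtrace_rho_mult:
  "X \<in> carrier_mat (dA * dB) (dA * dB) \<Longrightarrow> mtrace (\<rho> * X) = (\<Sum>k<N. qform (dA * dB) X (w k))"
  by (rule mtrace_mult_rank1_decomp[OF rho_carrier _ rho_decomp])

lemma sum_sqnorm_w: "(\<Sum>k<N. sqnorm (dA * dB) (w k)) = 1"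
proof -
  have "1 = mtrace (\<rho> * 1\<^sub>m (dA * dB))"
    using rho_carrier trace_rho by simp
  also have "\<dots> = (\<Sum>k<N. complex_of_real (sqnorm (dA * dB) (w k)))"
    unfolding mtrace_rho_mult[OF one_carrier_mat] qform_def mat_app_one[OF in_dim_w] cinner_self ..
  finally show ?thesis
    by (metis of_real_eq_1_iff of_real_sum)
qed

lemma mtrace_rho_kron_BS:
  assumes "x < 2" "a < 2" "y < 2" "b < 2"
  shows "mtrace (\<rho> * kron (A x a) (BS y b)) =
    (\<Sum>k<N. cinner (dA * dB) (mat_app (dA * dB) (QB y b) (w k)) (mat_app (dA * dB) (PA x a) (w k)))"
proof -
  let ?d = "dA * dB"
  have "kron (A x a) (BS y b) = PA x a * QB y b"
    unfolding QB_def using PA_mult_kron_id_left assms BS_carrier by simp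
  moreover have "PA x a * QB y b \<in> carrier_mat ?d ?d"
    using PA_carrier QB_carrier assms by (metis mult_carrier_mat)
  ultimately have "mtrace (\<rho> * kron (A x a) (BS y b)) = (\<Sum>k<N. qform ?d (PA x a * QB y b) (w k))"
    using mtrace_rho_mult by simp
  also have "\<dots> = (\<Sum>k<N. cinner ?d (mat_app ?d (PA x a) (mat_app ?d (QB y b) (w k))) (w k))"
    unfolding qform_def mat_app_mult[OF PA_carrier[OF assms(1,2)] QB_carrier[OF assms(3,4)]] ..
  also have "\<dots> = (\<Sum>k<N. cinner ?d (mat_app ?d (QB y b) (w k)) (mat_app ?d (PA x a) (w k)))"
    using hermitian_on_cinner_mat_app[OF psd_hermitian_on[OF povm_psd[OF povm_PA]]] assms
    by (simp add: less_2_cases_iff)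
  finally show ?thesis .
qed

lemma correlator_short:
  assumes "x < 2" "y < 2"
  shows "(\<Sum>a<2. \<Sum>b<2. (-1) ^ (a + b) * mtrace (\<rho> * kron (A x a) (BS y b))) =
    (\<Sum>k<N. cinner (dA * dB) (Bo y (w k)) (Ao x (w k)))"
  using assms unfolding sum_lessThan_2 binary_obs_def cinner_diff_left cinner_diff_right
  by (simp add: mtrace_rho_kron_BS sum_subtractf sum.distrib algebra_simps)

lemma CHSH_eq_sum_chsh_form:
  assumes pS: "\<And>a b x y. a < 2 \<Longrightarrow> b < 2 \<Longrightarrow> x < 2 \<Longrightarrow> y < 2 \<Longrightarrow>
      complex_of_real (pS a b x y) = mtrace (\<rho> * kron (A x a) (BS y b))"
  shows "CHSH pS = (\<Sum>k<N. chsh_form (w k))"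
proof -
  have "complex_of_real (corrS pS x y) = (\<Sum>k<N. cinner (dA * dB) (Bo y (w k)) (Ao x (w k)))"
    if "x < 2" "y < 2" for x y
    unfolding corrS_def correlator_short[OF that, symmetric] using pS that
    by (simp add: sum_lessThan_2)
  then have "complex_of_real (CHSH pS) = (\<Sum>k<N. cinner (dA * dB) (Bo 0 (w k)) (Ao 0 (w k))
      + cinner (dA * dB) (Bo 1 (w k)) (Ao 0 (w k)) + cinner (dA * dB) (Bo 0 (w k)) (Ao 1 (w k))
      - cinner (dA * dB) (Bo 1 (w k)) (Ao 1 (w k)))"
    unfolding CHSH_def sum_lessThan_2 by (simp add: sum.distrib sum_subtractf)
  then show ?thesis
    unfolding chsh_form_def by (metis Re_complex_of_real Re_sum)
qed

lemma chsh_form_saturated: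
  assumes pS: "\<And>a b x y. a < 2 \<Longrightarrow> b < 2 \<Longrightarrow> x < 2 \<Longrightarrow> y < 2 \<Longrightarrow>
      complex_of_real (pS a b x y) = mtrace (\<rho> * kron (A x a) (BS y b))"
    and CHSH: "CHSH pS = 2 * sqrt 2" and k: "k < N"
  shows "chsh_form (w k) = 2 * sqrt 2 * sqnorm (dA * dB) (w k)"
proof -
  have "(\<Sum>k<N. 2 * sqrt 2 * sqnorm (dA * dB) (w k) - chsh_form (w k)) = 0"
    using CHSH_eq_sum_chsh_form[OF pS] CHSH sum_sqnorm_w
    by (simp add: sum_subtractf flip: sum_distrib_left)
  moreover have "\<And>k. k \<in> {..<N} \<Longrightarrow> 0 \<le> 2 * sqrt 2 * sqnorm (dA * dB) (w k) - chsh_form (w k)"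
    using chsh_form_le[OF in_dim_w] by simp
  ultimately have "\<forall>k\<in>{..<N}. 2 * sqrt 2 * sqnorm (dA * dB) (w k) - chsh_form (w k) = 0"
    using sum_nonneg_eq_0_iff[of "{..<N}"
      "\<lambda>k. 2 * sqrt 2 * sqnorm (dA * dB) (w k) - chsh_form (w k)"]
    by simp
  then show ?thesis
    using k by simp
qed

lemma mtrace_rho_kron_E:
  assumes "x < 2" "a < 2" "l \<in> \<Lambda>"
  shows "mtrace (\<rho> * kron (A x a) (E l)) =
    (\<Sum>k<N. cinner (dA * dB) (mat_app (dA * dB) (EE l) (mat_app (dA * dB) (PA x a) (w k))) (w k))"
proof -
  let ?d = "dA * dB"
  have EE_carrier: "EE l \<in> carrier_mat ?d ?d"
    unfolding EE_def by (rule kron_carrier[OF one_carrier_mat E_carrier[OF assms(3)]])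
  have "kron (A x a) (E l) = EE l * PA x a"
    unfolding EE_def using PA_mult_kron_id_left assms E_carrier by simp
  moreover have "EE l * PA x a \<in> carrier_mat ?d ?d"
    using EE_carrier PA_carrier assms by (metis mult_carrier_mat)
  ultimately have "mtrace (\<rho> * kron (A x a) (E l)) = (\<Sum>k<N. qform ?d (EE l * PA x a) (w k))"
    using mtrace_rho_mult by simp
  also have "\<dots> = (\<Sum>k<N. cinner ?d (mat_app ?d (EE l) (mat_app ?d (PA x a) (w k))) (w k))"
    unfolding qform_def mat_app_mult[OF EE_carrier PA_carrier[OF assms(1,2)]] ..
  finally show ?thesis .
qed

lemma lambda_prob_eq: "l \<in> \<Lambda> \<Longrightarrow> lambda_prob l = (\<Sum>k<N. Re (qform (dA * dB) (EE l) (w k)))"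
  unfolding lambda_prob_def mtrace_rho_mult[OF kron_carrier[OF one_carrier_mat E_carrier]] EE_def
  by (simp add: Re_sum)

lemma psd_EE: "l \<in> \<Lambda> \<Longrightarrow> psd (dA * dB) (EE l)"
  unfolding EE_def by (rule povm_psd[OF povm_kron_id_left[OF povm_E]])

lemma lambda_prob_nonneg: "l \<in> \<Lambda> \<Longrightarrow> 0 \<le> lambda_prob l"
  unfolding lambda_prob_eq by (simp add: sum_nonneg psd_qform_nonneg psd_EE)

lemma sum_lambda_prob: "(\<Sum>l\<in>\<Lambda>. lambda_prob l) = 1"
proof -
  let ?d = "dA * dB"
  have fin: "finite \<Lambda>" using povm_E by (simp add: povm_def)
  have "(\<Sum>l\<in>\<Lambda>. qform ?d (EE l) (w k)) = cinner ?d (w k) (w k)" for k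
    unfolding qform_def cinner_sum_left[symmetric] EE_def
    using sum_mat_app_eq_self[OF fin povm_sum_eq_id[OF povm_kron_id_left[OF povm_E]] in_dim_w]
    by simp
  then have "(\<Sum>l\<in>\<Lambda>. \<Sum>k<N. Re (qform ?d (EE l) (w k))) = (\<Sum>k<N. sqnorm ?d (w k))"
    by (subst sum.swap) (simp add: sqnorm_def flip: Re_sum)
  then show ?thesis
    using lambda_prob_eq sum_sqnorm_w by simp
qed

lemma lambda_corr_eq:
  assumes "x < 2" "l \<in> \<Lambda>"
  shows "lambda_corr x l
      = Re (\<Sum>k<N. cinner (dA * dB) (mat_app (dA * dB) (EE l) (Ao x (w k))) (w k))"
  using assms unfolding lambda_corr_def sum_lessThan_2 binary_obs_def mat_app_diff cinner_diff_left
  by (simp add: mtrace_rho_kron_E sum_subtractf Re_sum)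

lemma marginal_lambda_prob:
  assumes "x < 2" "l \<in> \<Lambda>"
  shows "(\<Sum>a<2. Re (mtrace (\<rho> * kron (A x a) (E l)))) = lambda_prob l"
proof -
  let ?d = "dA * dB"
  have "cinner ?d (mat_app ?d (EE l) (mat_app ?d (PA x 0) (w k))) (w k)
      + cinner ?d (mat_app ?d (EE l) (mat_app ?d (PA x 1) (w k))) (w k) = qform ?d (EE l) (w k)" for k
  proof -
    let ?u = "mat_app ?d (PA x 0) (w k)" and ?v = "mat_app ?d (PA x 1) (w k)"
    have "cinner ?d (mat_app ?d (EE l) ?u) (w k) + cinner ?d (mat_app ?d (EE l) ?v) (w k)
        = cinner ?d (\<lambda>i. 1 * mat_app ?d (EE l) ?u i + 1 * mat_app ?d (EE l) ?v i) (w k)"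
      unfolding cinner_lincomb_left by simp
    also have "(\<lambda>i. 1 * mat_app ?d (EE l) ?u i + 1 * mat_app ?d (EE l) ?v i)
        = mat_app ?d (EE l) (\<lambda>i. 1 * ?u i + 1 * ?v i)"
      by (rule mat_app_lincomb[symmetric])
    also have "(\<lambda>i. 1 * ?u i + 1 * ?v i) = w k"
      using povm_binary_sum[OF povm_PA[OF assms(1)] in_dim_w] by simp
    finally show ?thesis
      unfolding qform_def .
  qed
  then have "(\<Sum>a<2. mtrace (\<rho> * kron (A x a) (E l))) = (\<Sum>k<N. qform ?d (EE l) (w k))"
    using assms by (simp add: sum_lessThan_2 mtrace_rho_kron_E flip: sum.distrib)
  then show ?thesis
    using lambda_prob_eq[OF assms(2)] by (metis Re_sum)
qed

lemma lambda_corr_bound: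
  assumes sat: "\<And>k. k < N \<Longrightarrow> chsh_form (w k) = 2 * sqrt 2 * sqnorm (dA * dB) (w k)"
    and l: "l \<in> \<Lambda>" and ab: "\<alpha>^2 + \<beta>^2 = 1"
  shows "\<bar>\<alpha> * lambda_corr 0 l + \<beta> * lambda_corr 1 l\<bar> \<le> lambda_prob l"
proof -
  let ?d = "dA * dB"
  let ?z = "\<lambda>k. complex_of_real \<alpha> * cinner ?d (mat_app ?d (EE l) (Ao 0 (w k))) (w k)
    + complex_of_real \<beta> * cinner ?d (mat_app ?d (EE l) (Ao 1 (w k))) (w k)"
  have E_commute: "EE l * PA x a = PA x a * EE l" if "x < 2" "a < 2" for x a
    unfolding EE_def using PA_mult_kron_id_left that E_carrier[OF l] by simp
  have "\<bar>\<alpha> * lambda_corr 0 l + \<beta> * lambda_corr 1 l\<bar> = \<bar>Re (\<Sum>k<N. ?z k)\<bar>"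
    using l by (simp add: lambda_corr_eq sum.distrib sum_distrib_left Re_sum)
  also have "\<dots> \<le> cmod (\<Sum>k<N. ?z k)"
    by (rule abs_Re_le_cmod)
  also have "\<dots> \<le> (\<Sum>k<N. cmod (?z k))"
    by (rule norm_sum)
  also have "\<dots> \<le> (\<Sum>k<N. Re (qform ?d (EE l) (w k)))"
    using commuting_effect_bound[OF in_dim_w sat psd_EE[OF l] E_commute ab] by (intro sum_mono) simp
  also have "\<dots> = lambda_prob l"
    by (rule lambda_prob_eq[OF l, symmetric])
  finally show ?thesis .
qed

lemma corrL_eq_lambda_corr:
  fixes pL :: "nat \<Rightarrow> nat option \<Rightarrow> nat \<Rightarrow> nat \<Rightarrow> real" and pb :: "nat option \<Rightarrow> nat \<Rightarrow> nat \<Rightarrow> real"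
  assumes pL: "\<And>a b. a < 2 \<Longrightarrow> b < 2 \<Longrightarrow>
      pL a (Some b) x y = (\<Sum>l\<in>\<Lambda>. pb (Some b) y l * Re (mtrace (\<rho> * kron (A x a) (E l))))"
  shows "corrL pL x y = (\<Sum>l\<in>\<Lambda>. (pb (Some 0) y l - pb (Some 1) y l) * lambda_corr x l)"
  using pL unfolding corrL_def lambda_corr_def
  by (simp add: sum_lessThan_2 sum_subtractf sum.distrib algebra_simps)

lemma marginal_eq_lambda_prob:
  fixes pL :: "nat \<Rightarrow> nat option \<Rightarrow> nat \<Rightarrow> nat \<Rightarrow> real" and pb :: "nat option \<Rightarrow> nat \<Rightarrow> nat \<Rightarrow> real"
  assumes pL: "\<And>a b. a < 2 \<Longrightarrow> b < 2 \<Longrightarrow>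
      pL a (Some b) 0 y = (\<Sum>l\<in>\<Lambda>. pb (Some b) y l * Re (mtrace (\<rho> * kron (A 0 a) (E l))))"
  shows "(\<Sum>b<2. \<Sum>a<2. pL a (Some b) 0 y)
      = (\<Sum>l\<in>\<Lambda>. (pb (Some 0) y l + pb (Some 1) y l) * lambda_prob l)"
proof -
  have "(\<Sum>b<2. \<Sum>a<2. pL a (Some b) 0 y)
      = (\<Sum>l\<in>\<Lambda>. (pb (Some 0) y l + pb (Some 1) y l) * (\<Sum>a<2. Re (mtrace (\<rho> * kron (A 0 a) (E l)))))"
    using pL by (simp add: sum_lessThan_2 sum.distrib algebra_simps)
  also have "\<dots> = (\<Sum>l\<in>\<Lambda>. (pb (Some 0) y l + pb (Some 1) y l) * lambda_prob l)"
    by (intro sum.cong refl) (simp add: marginal_lambda_prob)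
  finally show ?thesis .
qed

lemma Tn_eq_lambda_prob:
  fixes pL :: "nat \<Rightarrow> nat option \<Rightarrow> nat \<Rightarrow> nat \<Rightarrow> real" and pb :: "nat option \<Rightarrow> nat \<Rightarrow> nat \<Rightarrow> real"
  assumes pL: "\<And>a b y. a < 2 \<Longrightarrow> b < 2 \<Longrightarrow> y < n \<Longrightarrow>
      pL a (Some b) 0 y = (\<Sum>l\<in>\<Lambda>. pb (Some b) y l * Re (mtrace (\<rho> * kron (A 0 a) (E l))))"
    and n: "n \<noteq> 0"
  shows "real n * Tn n pL = (\<Sum>y<n. \<Sum>l\<in>\<Lambda>. (pb (Some 0) y l + pb (Some 1) y l) * lambda_prob l)"
proof -
  have "(\<Sum>b<2. \<Sum>a<2. pL a (Some b) 0 y)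
      = (\<Sum>l\<in>\<Lambda>. (pb (Some 0) y l + pb (Some 1) y l) * lambda_prob l)"
    if "y < n" for y
    by (rule marginal_eq_lambda_prob) (simp add: pL that)
  then show ?thesis
    using n by (simp add: Tn_def)
qed

lemma Wn_eq_lambda_corr:
  fixes pL :: "nat \<Rightarrow> nat option \<Rightarrow> nat \<Rightarrow> nat \<Rightarrow> real" and pb :: "nat option \<Rightarrow> nat \<Rightarrow> nat \<Rightarrow> real"
  assumes pL: "\<And>a b x y. a < 2 \<Longrightarrow> b < 2 \<Longrightarrow> x < 2 \<Longrightarrow> y < n \<Longrightarrow>
      pL a (Some b) x y = (\<Sum>l\<in>\<Lambda>. pb (Some b) y l * Re (mtrace (\<rho> * kron (A x a) (E l))))"
    and n: "n \<noteq> 0"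
  shows "real n * Wn n pL = (\<Sum>y<n. \<Sum>l\<in>\<Lambda>. (pb (Some 0) y l - pb (Some 1) y l)
      * (cos (theta n y) * lambda_corr 0 l + sin (theta n y) * lambda_corr 1 l))"
proof -
  have corrL: "corrL pL x y = (\<Sum>l\<in>\<Lambda>. (pb (Some 0) y l - pb (Some 1) y l) * lambda_corr x l)"
    if "x < 2" "y < n" for x y
    by (rule corrL_eq_lambda_corr) (simp add: pL that)
  have "real n * Wn n pL = (\<Sum>y<n. cos (theta n y) * corrL pL 0 y + sin (theta n y) * corrL pL 1 y)"
    using n by (simp add: Wn_def)
  also have "\<dots> = (\<Sum>y<n. \<Sum>l\<in>\<Lambda>. (pb (Some 0) y l - pb (Some 1) y l)
      * (cos (theta n y) * lambda_corr 0 l + sin (theta n y) * lambda_corr 1 l))"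
    by (intro sum.cong refl) (simp add: corrL sum_distrib_left algebra_simps flip: sum.distrib)
  finally show ?thesis .
qed

lemma Tn_le_inverse_n:
  fixes pL :: "nat \<Rightarrow> nat option \<Rightarrow> nat \<Rightarrow> nat \<Rightarrow> real" and pb :: "nat option \<Rightarrow> nat \<Rightarrow> nat \<Rightarrow> real"
  assumes pS: "\<And>a b x y. a < 2 \<Longrightarrow> b < 2 \<Longrightarrow> x < 2 \<Longrightarrow> y < 2 \<Longrightarrow>
      complex_of_real (pS a b x y) = mtrace (\<rho> * kron (A x a) (BS y b))"
    and CHSH: "CHSH pS = 2 * sqrt 2"
    and pL: "\<And>a b x y. a < 2 \<Longrightarrow> b < 2 \<Longrightarrow> x < 2 \<Longrightarrow> y < n \<Longrightarrow>
      pL a (Some b) x y = (\<Sum>l\<in>\<Lambda>. pb (Some b) y l * Re (mtrace (\<rho> * kron (A x a) (E l))))"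
    and pb: "\<And>y l. y < n \<Longrightarrow> l \<in> \<Lambda> \<Longrightarrow>
      0 \<le> pb (Some 0) y l \<and> 0 \<le> pb (Some 1) y l \<and> pb (Some 0) y l + pb (Some 1) y l \<le> 1"
    and Wn_Tn: "Wn n pL = Tn n pL"
  shows "Tn n pL \<le> 1 / real n"
proof (cases "n = 0")
  case True
  then show ?thesis by (simp add: Tn_def)
next
  case False
  have Tn_eq: "real n * Tn n pL = (\<Sum>y<n. \<Sum>l\<in>\<Lambda>. (pb (Some 0) y l + pb (Some 1) y l) * lambda_prob l)"
    by (rule Tn_eq_lambda_prob) (simp_all add: pL False)
  have "real n * Tn n pL \<le> 1"
    unfolding Tn_eq
  proof (rule theta_double_sum_le_1)
    show "finite \<Lambda>"
      using povm_E by (simp add: povm_def)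
    show "(\<Sum>y<n. \<Sum>l\<in>\<Lambda>. (pb (Some 0) y l - pb (Some 1) y l)
        * (cos (theta n y) * lambda_corr 0 l + sin (theta n y) * lambda_corr 1 l))
      = (\<Sum>y<n. \<Sum>l\<in>\<Lambda>. (pb (Some 0) y l + pb (Some 1) y l) * lambda_prob l)"
      using Wn_eq_lambda_corr[of n pL pb] pL False Tn_eq Wn_Tn by simp
    show "\<bar>\<alpha> * lambda_corr 0 l + \<beta> * lambda_corr 1 l\<bar> \<le> lambda_prob l"
      if "l \<in> \<Lambda>" "\<alpha>^2 + \<beta>^2 = 1" for l \<alpha> \<beta>
      using lambda_corr_bound chsh_form_saturated[OF pS CHSH] that by blast
  qed (use pb lambda_prob_nonneg sum_lambda_prob in \<open>auto simp: abs_le_iff\<close>)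
  then show ?thesis
    using False by (simp add: field_simps)
qed

end

theorem SRQ_saturated_Tn_le:
  assumes SRQ: "SRQ n pS pL" and CHSH: "CHSH pS = 2 * sqrt 2" and Wn_Tn: "Wn n pL = Tn n pL"
  shows "Tn n pL \<le> 1 / real n"
proof -
  from SRQ obtain dA dB :: nat and \<rho> A BS and E :: "nat \<Rightarrow> complex mat" and \<Lambda> :: "nat set" and pb where
    rho: "density_op (dA * dB) \<rho>" and povm_A: "\<forall>x<2. povm dA {0, 1} (A x)"
    and povm_BS: "\<forall>y<2. povm dB {0, 1} (BS y)" and "finite \<Lambda>" and povm_E: "povm dB \<Lambda> E"
    and pb: "\<forall>y<n. \<forall>l\<in>\<Lambda>. (\<forall>b\<in>outL. pb b y l \<ge> 0) \<and> (\<Sum>b\<in>outL. pb b y l) = 1"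
    and pS: "\<forall>a<2. \<forall>b<2. \<forall>x<2. \<forall>y<2. complex_of_real (pS a b x y)
        = mtrace (\<rho> * kron (A x a) (BS y b))"
    and pL: "\<forall>a<2. \<forall>b\<in>outL. \<forall>x<2. \<forall>y<n. complex_of_real (pL a b x y) =
      (\<Sum>l\<in>\<Lambda>. complex_of_real (pb b y l) * mtrace (\<rho> * kron (A x a) (E l)))"
    unfolding SRQ_def by (elim exE conjE) (rule that)
  from rho have "psd (dA * dB) \<rho>" by (simp add: density_op_def)
  then obtain N :: nat and w where w: "\<And>k. in_dim (dA * dB) (w k)"
    and decomp: "\<forall>i<dA * dB. \<forall>j<dA * dB. \<rho>$$(i,j) = (\<Sum>k<N. w k i * cnj (w k j))"
    by (rule psd_rank1_decompE) blast
  interpret M: srq_model dA dB \<rho> N w A BS E \<Lambda>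
    using rho w decomp povm_A povm_BS povm_E
    by unfold_locales (auto simp: density_op_def psd_iff_qform)
  have "pL a (Some b) x y = (\<Sum>l\<in>\<Lambda>. pb (Some b) y l * Re (mtrace (\<rho> * kron (A x a) (E l))))"
    if "a < 2" "b < 2" "x < 2" "y < n" for a b x y
  proof -
    have "Some b \<in> outL" using that(2) by (auto simp: outL_def)
    then have "pL a (Some b) x y
        = Re (\<Sum>l\<in>\<Lambda>. complex_of_real (pb (Some b) y l) * mtrace (\<rho> * kron (A x a) (E l)))"
      using pL that by (metis Re_complex_of_real)
    then show ?thesis by simp
  qed
  moreover have "0 \<le> pb (Some 0) y l \<and> 0 \<le> pb (Some 1) y l \<and> pb (Some 0) y l + pb (Some 1) y l \<le> 1"
    if "y < n" "l \<in> \<Lambda>" for y l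
  proof -
    have "0 \<le> pb None y l" "pb (Some 0) y l + pb (Some 1) y l + pb None y l = 1"
      "0 \<le> pb (Some 0) y l" "0 \<le> pb (Some 1) y l"
      using pb that by (auto simp: outL_def add.assoc)
    then show ?thesis by linarith
  qed
  ultimately show ?thesis
    using M.Tn_le_inverse_n[OF _ CHSH _ _ Wn_Tn] pS by simp
qed

section \<open>The quantum strategy\<close>

lemma expect_kron:
  assumes "P \<in> carrier_mat 2 2" "Q \<in> carrier_mat 2 2"
  shows "expect (kron P Q) =
    (P$$(0,0) * Q$$(0,0) + P$$(0,1) * Q$$(0,1) + P$$(1,0) * Q$$(1,0) + P$$(1,1) * Q$$(1,1)) / 2"
proof -
  have four: "{..<4::nat} = {0, 1, 2, 3}" by auto
  have sqrt2: "complex_of_real (sqrt 2) * complex_of_real (sqrt 2) = 2"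
    by (simp flip: of_real_mult)
  then have "complex_of_real (sqrt 2) * (complex_of_real (sqrt 2) * z) = 2 * z" for z
    by (simp flip: mult.assoc)
  with sqrt2 show ?thesis
    using assms unfolding expect_def kron_def phi_plus_def
    by (simp add: scalar_prod_def four mult_mat_vec_def power2_eq_square field_simps)
qed

lemma expect_kron_smult_right:
  "P \<in> carrier_mat 2 2 \<Longrightarrow> Q \<in> carrier_mat 2 2 \<Longrightarrow>
    expect (kron P (c \<cdot>\<^sub>m Q)) = c * expect (kron P Q)"
  by (simp add: expect_kron field_simps)

lemma proj_carrier: "Obs \<in> carrier_mat 2 2 \<Longrightarrow> proj Obs a \<in> carrier_mat 2 2"
  unfolding proj_def by auto

lemma proj_index:
  "Obs \<in> carrier_mat 2 2 \<Longrightarrow> i < 2 \<Longrightarrow> j < 2 \<Longrightarrow>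
    proj Obs a $$ (i, j) = ((if i = j then 1 else 0) + (-1) ^ a * Obs $$ (i, j)) / 2"
  unfolding proj_def by auto

lemma correlator_proj:
  assumes "P \<in> carrier_mat 2 2" "Q \<in> carrier_mat 2 2"
  shows "(\<Sum>a<2. \<Sum>b<2. (-1) ^ (a + b) * Re (expect (kron (proj P a) (proj Q b)))) =
    Re ((P$$(0,0) * Q$$(0,0) + P$$(0,1) * Q$$(0,1) + P$$(1,0) * Q$$(1,0) + P$$(1,1) * Q$$(1,1)) / 2)"
  using assms by (simp add: sum_lessThan_2 expect_kron proj_carrier proj_index field_simps)

lemma marginal_proj:
  assumes "P \<in> carrier_mat 2 2" "Q \<in> carrier_mat 2 2"
  shows "(\<Sum>b<2. \<Sum>a<2. Re (expect (kron (proj P a) (proj Q b)))) = 1"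
  using assms by (simp add: sum_lessThan_2 expect_kron proj_carrier proj_index field_simps)

definition obsA :: "nat \<Rightarrow> complex mat" where
  "obsA x = (if x = 0 then Zm else Xm)"

definition obsBS :: "nat \<Rightarrow> complex mat" where
  "obsBS y = (1 / complex_of_real (sqrt 2)) \<cdot>\<^sub>m (if y = 0 then Zm + Xm else Zm - Xm)"

definition obs_angle :: "real \<Rightarrow> complex mat" where
  "obs_angle t = complex_of_real (cos t) \<cdot>\<^sub>m Zm + complex_of_real (sin t) \<cdot>\<^sub>m Xm"

lemma Zm_carrier: "Zm \<in> carrier_mat 2 2" and Xm_carrier: "Xm \<in> carrier_mat 2 2"
  by (auto simp: Zm_def Xm_def mat_of_rows_list_def)

lemma obsA_carrier: "obsA x \<in> carrier_mat 2 2"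
  and obsBS_carrier: "obsBS y \<in> carrier_mat 2 2"
  and obs_angle_carrier: "obs_angle t \<in> carrier_mat 2 2"
  using Zm_carrier Xm_carrier by (auto simp: obsA_def obsBS_def obs_angle_def)

lemma obsA_index:
  "obsA 0 $$ (0,0) = 1" "obsA 0 $$ (0,1) = 0" "obsA 0 $$ (1,0) = 0" "obsA 0 $$ (1,1) = -1"
  "obsA 1 $$ (0,0) = 0" "obsA 1 $$ (0,1) = 1" "obsA 1 $$ (1,0) = 1" "obsA 1 $$ (1,1) = 0"
  by (auto simp: obsA_def Zm_def Xm_def mat_of_rows_list_def)

lemma obsBS_index:
  "obsBS 0 $$ (0,0) = 1 / sqrt 2" "obsBS 0 $$ (0,1) = 1 / sqrt 2"
  "obsBS 0 $$ (1,0) = 1 / sqrt 2" "obsBS 0 $$ (1,1) = - 1 / sqrt 2"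
  "obsBS 1 $$ (0,0) = 1 / sqrt 2" "obsBS 1 $$ (0,1) = - 1 / sqrt 2"
  "obsBS 1 $$ (1,0) = - 1 / sqrt 2" "obsBS 1 $$ (1,1) = - 1 / sqrt 2"
  by (auto simp: obsBS_def Zm_def Xm_def mat_of_rows_list_def)

lemma obs_angle_index:
  "obs_angle t $$ (0,0) = cos t" "obs_angle t $$ (0,1) = sin t"
  "obs_angle t $$ (1,0) = sin t" "obs_angle t $$ (1,1) = - cos t"
  by (auto simp: obs_angle_def Zm_def Xm_def mat_of_rows_list_def)

lemma Aq_eq_proj: "Aq x a = proj (obsA x) a"
  by (simp add: Aq_def obsA_def)

lemma BSq_eq_proj: "BSq y b = proj (obsBS y) b"
  by (simp add: BSq_def obsBS_def)

lemma BLq_Some_eq_proj: "BLq \<eta> n y (Some b) = complex_of_real \<eta> \<cdot>\<^sub>m proj (obs_angle (theta n y)) b"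
  unfolding BLq_def proj_def obs_angle_def by (auto simp: smult_smult_assoc)

lemma pQL_Some:
  "pQL \<eta> n a (Some b) x y
      = \<eta> * Re (expect (kron (proj (obsA x) a) (proj (obs_angle (theta n y)) b)))"
  unfolding pQL_def Aq_eq_proj BLq_Some_eq_proj
  by (simp add: expect_kron_smult_right proj_carrier obsA_carrier obs_angle_carrier)

lemma corrS_pQS:
  "corrS pQS 0 0 = 1 / sqrt 2" "corrS pQS 0 1 = 1 / sqrt 2"
  "corrS pQS 1 0 = 1 / sqrt 2" "corrS pQS 1 1 = - 1 / sqrt 2"
  unfolding corrS_def pQS_def Aq_eq_proj BSq_eq_proj correlator_proj[OF obsA_carrier obsBS_carrier]
    obsA_index obsBS_index
  by (simp_all add: field_simps)

lemma corrL_pQL: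
  "corrL (pQL \<eta> n) 0 y = \<eta> * cos (theta n y)" "corrL (pQL \<eta> n) 1 y = \<eta> * sin (theta n y)"
proof -
  have "corrL (pQL \<eta> n) x y = \<eta> *
      (\<Sum>a<2. \<Sum>b<2. (-1) ^ (a + b) * Re (expect (kron (proj (obsA x) a) (proj (obs_angle (theta n y)) b))))"
    for x
    unfolding corrL_def pQL_Some by (simp add: sum_distrib_left mult.left_commute)
  note corrL_eq = this
  show "corrL (pQL \<eta> n) 0 y = \<eta> * cos (theta n y)" "corrL (pQL \<eta> n) 1 y = \<eta> * sin (theta n y)"
    unfolding corrL_eq correlator_proj[OF obsA_carrier obs_angle_carrier] obsA_index obs_angle_index
    by simp_all
qed

lemma CHSH_pQS: "CHSH pQS = 2 * sqrt 2"
proof -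
  have "CHSH pQS = 4 / sqrt 2"
    unfolding CHSH_def sum_lessThan_2 corrS_pQS by simp
  also have "\<dots> = 2 * sqrt 2"
    by (simp add: field_simps)
  finally show ?thesis .
qed

lemma Tn_pQL: "n \<ge> 1 \<Longrightarrow> Tn n (pQL \<eta> n) = \<eta>"
  unfolding Tn_def pQL_Some
  by (simp add: marginal_proj[OF obsA_carrier obs_angle_carrier] flip: sum_distrib_left)

lemma Wn_pQL: "n \<ge> 1 \<Longrightarrow> Wn n (pQL \<eta> n) = \<eta>"
  unfolding Wn_def corrL_pQL
  by (simp add: algebra_simps flip: distrib_left power2_eq_square)

text \<open>The hypotheses 0 < \<eta> \<le> 1 only make the long-path measurement a POVM; the proof does not need them.\<close>

theorem mainTheorem13:
  fixes n :: nat and \<eta> :: real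
  assumes "n \<ge> 1" and "0 < \<eta>" and "\<eta> \<le> 1"
  shows "CHSH pQS = 2 * sqrt 2 \<and> Tn n (pQL \<eta> n) = \<eta> \<and> Wn n (pQL \<eta> n) = \<eta> \<and>
         (\<eta> > 1 / real n \<longrightarrow> \<not> SRQ n pQS (pQL \<eta> n))"
proof (intro conjI impI notI)
  show "CHSH pQS = 2 * sqrt 2" by (rule CHSH_pQS)
  show Tn: "Tn n (pQL \<eta> n) = \<eta>" by (rule Tn_pQL[OF assms(1)])
  show Wn: "Wn n (pQL \<eta> n) = \<eta>" by (rule Wn_pQL[OF assms(1)])
  assume "\<eta> > 1 / real n" and "SRQ n pQS (pQL \<eta> n)"
  with SRQ_saturated_Tn_le[OF _ CHSH_pQS] Tn Wn show False by fastforce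
qed

end
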